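(* (1) If $\rho<\operatorname{inj}(\Gamma,x)$, then $S^+(\ell,\rho,x)$ is $\delta$-separated with $\delta=2(\operatorname{inj}(\Gamma,x)-\rho)$. (2) If $\operatorname{inj}(\Gamma,x)\le\rho$, then $S^+(\ell,\rho,x)$ is not $\delta$-separated for any $\delta>0$.
   Context: $\mathbb{D}=\{z\in\mathbb{C}:|z|<1\}$ with hyperbolic metric $d$ induced by $ds=2|dz|/(1-|z|^2)$; geodesics are parametrised with unit speed and the normal bundle of an oriented geodesic is oriented by the standard orientation of $\mathbb{D}$ and that of the geodesic. Standing setting: $\Gamma$ is a cocompact Fuchsian group with fundamental domain $\tau$ a hyperbolic polygon whose side-pairing generators are none of them their own inverse; $\Sigma_\Gamma=\Gamma\backslash\mathbb{D}$; $\ell$ is a geodesic in $\mathbb{D}$ with unit-speed parametrisation $\kappa_\ell$ such that the image of $\{(\kappa_\ell(t),\kappa_\ell'(t))\}$ in $\operatorname{ST}(\Sigma_\Gamma)$ is a dense orbit of the geodesic flow; $x\in\tau^\circ$ and $\rho>0$. $\operatorname{inj}(\Gamma,x)=\frac12\inf\{d(y,z):y,z\in\Gamma(x),y\ne z\}$. For a geodesic $k$ with unit-speed parametrisation $\kappa$: $\overline{\mathcal{N}(k,\rho)}^+$ is the union of $\{y:d(y,k)<\rho\}$ with the component of its boundary on the positive side of $k$; $p_k$ is orthogonal projection onto $k$; $S^+(k,\rho,x)=\kappa^{-1}(p_k(\Gamma(x)\cap\overline{\mathcal{N}(k,\rho)}^+))\subseteq\mathbb{R}$. A set $S\subseteq\mathbb{R}$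 is $\delta$-separated if $|s-s'|\ge\delta$ for all distinct $s,s'\in S$. *)

theory Defs
  imports "HOL-Analysis.Analysis"
begin

definition disc :: "complex set" where
  "disc = ball 0 1"

text \<open>Hyperbolic distance induced by ds = 2|dz|/(1-|z|^2) (closed form).\<close>
definition hdist :: "complex \<Rightarrow> complex \<Rightarrow> real" where
  "hdist z w = arcosh (1 + 2 * (cmod (z - w))^2 / ((1 - (cmod z)^2) * (1 - (cmod w)^2)))"

text \<open>Orientation preserving isometries of the disc (elements of PSU(1,1)).\<close>
definition moeb :: "complex \<Rightarrow> complex \<Rightarrow> complex \<Rightarrow> complex" where
  "moeb a b z = (a * z + b) / (cnj b * z + cnj a)"

definition disc_aut :: "(complex \<Rightarrow> complex) \<Rightarrow> bool" where
  "disc_aut g \<longleftrightarrow> (\<exists>a b. (cmod a)^2 - (cmod b)^2 = 1 \<and> g = moeb a b)"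

text \<open>A Fuchsian group: a discrete group of orientation preserving isometries of the
  disc (group operations are taken on the disc).  Discreteness is expressed by the
  equivalent finiteness of all sets of elements with bounded displacement.\<close>
definition fuchsian :: "(complex \<Rightarrow> complex) set \<Rightarrow> bool" where
  "fuchsian G \<longleftrightarrow>
     (\<forall>g\<in>G. disc_aut g) \<and> (\<lambda>z. z) \<in> G \<and>
     (\<forall>g\<in>G. \<forall>h\<in>G. \<exists>k\<in>G. \<forall>z\<in>disc. k z = g (h z)) \<and>
     (\<forall>g\<in>G. \<exists>k\<in>G. \<forall>z\<in>disc. k (g z) = z) \<and>
     (\<forall>z\<in>disc. \<forall>R. finite {g\<in>G. hdist (g z) z \<le> R})"

text \<open>Cocompact: the quotient of the disc by the group is compact, i.e. a compact
  subset of the disc meets every orbit.\<close>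
definition cocompact :: "(complex \<Rightarrow> complex) set \<Rightarrow> bool" where
  "cocompact G \<longleftrightarrow> (\<exists>K. compact K \<and> K \<subseteq> disc \<and> disc \<subseteq> (\<Union>g\<in>G. g ` K))"

definition orbit :: "(complex \<Rightarrow> complex) set \<Rightarrow> complex \<Rightarrow> complex set" where
  "orbit G x = (\<lambda>g. g x) ` G"

definition inj_rad :: "(complex \<Rightarrow> complex) set \<Rightarrow> complex \<Rightarrow> real" where
  "inj_rad G x = (1/2) * Inf {hdist y z | y z. y \<in> orbit G x \<and> z \<in> orbit G x \<and> y \<noteq> z}"

definition hseg :: "complex \<Rightarrow> complex \<Rightarrow> complex set" where
  "hseg p q = {z\<in>disc. hdist p z + hdist z q = hdist p q}"

definition hpolygon :: "complex set \<Rightarrow> complex set set \<Rightarrow> bool" where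
  "hpolygon T Sd \<longleftrightarrow>
     compact T \<and> T \<subseteq> disc \<and> interior T \<noteq> {} \<and>
     (\<forall>p\<in>T. \<forall>q\<in>T. hseg p q \<subseteq> T) \<and>
     finite Sd \<and> (\<forall>s\<in>Sd. \<exists>p\<in>disc. \<exists>q\<in>disc. p \<noteq> q \<and> s = hseg p q) \<and>
     frontier T = \<Union>Sd \<and>
     (\<forall>s\<in>Sd. \<forall>s'\<in>Sd. s \<noteq> s' \<longrightarrow> finite (s \<inter> s'))"

definition fundamental_domain :: "(complex \<Rightarrow> complex) set \<Rightarrow> complex set \<Rightarrow> bool" where
  "fundamental_domain G T \<longleftrightarrow>
     T \<subseteq> disc \<and> closed T \<and> (\<Union>g\<in>G. g ` T) = disc \<and>
     (\<forall>g\<in>G. (\<exists>z\<in>disc. g z \<noteq> z) \<longrightarrow> g ` interior T \<inter> interior T = {})"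

text \<open>The side-pairing element of a side s is the g with g(T) \<inter> T = s (it maps the side
  g^{-1}(s) onto s).  Every side is paired, and no side-pairing element is its own
  inverse.\<close>
definition side_pairing :: "(complex \<Rightarrow> complex) set \<Rightarrow> complex set \<Rightarrow> complex set set
    \<Rightarrow> (complex \<Rightarrow> complex) \<Rightarrow> bool" where
  "side_pairing G T Sd g \<longleftrightarrow> g \<in> G \<and> (\<exists>s\<in>Sd. g ` T \<inter> T = s)"

definition pairing_no_involution :: "(complex \<Rightarrow> complex) set \<Rightarrow> complex set \<Rightarrow> complex set set \<Rightarrow> bool" where
  "pairing_no_involution G T Sd \<longleftrightarrow>
     (\<forall>s\<in>Sd. \<exists>g\<in>G. g ` T \<inter> T = s \<and> {z\<in>disc. g z \<in> s} \<in> Sd) \<and>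
     (\<forall>g. side_pairing G T Sd g \<longrightarrow> (\<exists>z\<in>disc. g (g z) \<noteq> z))"

definition unit_geodesic :: "(real \<Rightarrow> complex) \<Rightarrow> bool" where
  "unit_geodesic \<kappa> \<longleftrightarrow> range \<kappa> \<subseteq> disc \<and> (\<forall>s t. hdist (\<kappa> s) (\<kappa> t) = \<bar>s - t\<bar>)"

definition unit_tangent :: "(complex \<times> complex) set" where
  "unit_tangent = {(z, v). z \<in> disc \<and> 2 * cmod v / (1 - (cmod z)^2) = 1}"

text \<open>The orbit of (kappa(t), kappa'(t)) is dense in ST(Gamma\D): equivalently, its
  Gamma-saturation (lift) is dense in the unit tangent bundle of the disc.\<close>
definition dense_geodesic :: "(complex \<Rightarrow> complex) set \<Rightarrow> (real \<Rightarrow> complex) \<Rightarrow> bool" where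
  "dense_geodesic G \<kappa> \<longleftrightarrow>
     unit_tangent \<subseteq> closure {(g (\<kappa> t), deriv g (\<kappa> t) * vector_derivative \<kappa> (at t)) | g t. g \<in> G}"

definition dist_geo :: "(real \<Rightarrow> complex) \<Rightarrow> complex \<Rightarrow> real" where
  "dist_geo \<kappa> y = (INF t. hdist y (\<kappa> t))"

definition proj_par :: "(real \<Rightarrow> complex) \<Rightarrow> complex \<Rightarrow> real" where
  "proj_par \<kappa> y = (THE t. \<forall>s. hdist y (\<kappa> t) \<le> hdist y (\<kappa> s))"

text \<open>Positive side: the component of disc minus the geodesic into which the positive
  normal i*kappa'(t) points (standard orientation of the disc).\<close>
definition pos_side :: "(real \<Rightarrow> complex) \<Rightarrow> complex set" where
  "pos_side \<kappa> = {y \<in> disc - range \<kappa>. \<exists>t e. e > 0 \<and>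
      (\<forall>\<epsilon>. 0 < \<epsilon> \<and> \<epsilon> < e \<longrightarrow>
         \<kappa> t + of_real \<epsilon> * \<i> * vector_derivative \<kappa> (at t)
           \<in> connected_component_set (disc - range \<kappa>) y)}"

definition nbhd_plus :: "(real \<Rightarrow> complex) \<Rightarrow> real \<Rightarrow> complex set" where
  "nbhd_plus \<kappa> \<rho> = {y\<in>disc. dist_geo \<kappa> y < \<rho>} \<union> {y\<in>disc. dist_geo \<kappa> y = \<rho> \<and> y \<in> pos_side \<kappa>}"

definition Splus :: "(complex \<Rightarrow> complex) set \<Rightarrow> (real \<Rightarrow> complex) \<Rightarrow> real \<Rightarrow> complex \<Rightarrow> real set" where
  "Splus G \<kappa> \<rho> x = proj_par \<kappa> ` (orbit G x \<inter> nbhd_plus \<kappa> \<rho>)"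

definition separated :: "real \<Rightarrow> real set \<Rightarrow> bool" where
  "separated \<delta> S \<longleftrightarrow> (\<forall>s\<in>S. \<forall>s'\<in>S. s \<noteq> s' \<longrightarrow> \<bar>s - s'\<bar> \<ge> \<delta>)"

end

theory Submission
  imports Defs
begin

text \<open>
  (1) Let y, z be distinct orbit points within distance \<rho> of \<ell>, projecting to the parameters
  s, s'.  The triangle inequality through \<ell>(s) and \<ell>(s') gives
  2 inj(\<Gamma>,x) \<le> d(y,z) \<le> 2\<rho> + |s - s'|.

  (2) Discreteness and cocompactness make inj(\<Gamma>,x) attained: d(c x, x) = 2 inj(\<Gamma>,x) for some
  c \<in> \<Gamma>.  In the disc, a pair q, -q of points at that distance, placed nearly perpendicular
  to the real diameter, lies strictly within \<rho> of the diameter and projects to two distinct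
  parameters less than \<delta> apart.  The isometry carrying (c x, x) to (q, -q) is encoded by a
  unit tangent vector, and the conditions are open in that vector.  By density of \<ell> in the
  unit tangent bundle, some g \<in> \<Gamma> moves a tangent vector of \<ell> close enough, so that
  g\<inverse>(c x) and g\<inverse> x are orbit points in the \<rho>-neighbourhood of \<ell> with projections less than \<delta>
  apart.  Strictness of all inequalities makes the boundary convention in N(\<ell>,\<rho>)+ irrelevant.
\<close>

definition hcosh :: "complex \<Rightarrow> complex \<Rightarrow> real" where
  "hcosh y z = 1 + 2 * (cmod (y - z))^2 / ((1 - (cmod y)^2) * (1 - (cmod z)^2))"

lemma disc_iff: "z \<in> disc \<longleftrightarrow> cmod z < 1"
  by (simp add: disc_def)

lemma disc_norm_sq_less_1: "z \<in> disc \<Longrightarrow> (cmod z)^2 < 1"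
  by (simp add: disc_def abs_square_less_1)

lemma hdist_eq_arcosh_hcosh: "hdist y z = arcosh (hcosh y z)"
  by (simp add: hdist_def hcosh_def)

lemma hcosh_ge_1: "y \<in> disc \<Longrightarrow> z \<in> disc \<Longrightarrow> hcosh y z \<ge> 1"
  using disc_norm_sq_less_1[of y] disc_norm_sq_less_1[of z] by (simp add: hcosh_def)

lemma hdist_nonneg: "y \<in> disc \<Longrightarrow> z \<in> disc \<Longrightarrow> hdist y z \<ge> 0"
  using hcosh_ge_1 by (simp add: hdist_eq_arcosh_hcosh)

lemma cosh_hdist: "y \<in> disc \<Longrightarrow> z \<in> disc \<Longrightarrow> cosh (hdist y z) = hcosh y z"
  using hcosh_ge_1 by (simp add: hdist_eq_arcosh_hcosh)

lemma hdist_less_iff_hcosh: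
  assumes "a \<in> disc" "b \<in> disc" "c \<in> disc" "d \<in> disc"
  shows "hdist a b < hdist c d \<longleftrightarrow> hcosh a b < hcosh c d"
  using hcosh_ge_1 assms by (simp add: hdist_eq_arcosh_hcosh)

lemma hdist_le_iff_hcosh:
  assumes "a \<in> disc" "b \<in> disc" "c \<in> disc" "d \<in> disc"
  shows "hdist a b \<le> hdist c d \<longleftrightarrow> hcosh a b \<le> hcosh c d"
  using hdist_less_iff_hcosh[of c d a b] assms by (meson not_le)

lemma hdist_eq_iff_hcosh:
  assumes "a \<in> disc" "b \<in> disc" "c \<in> disc" "d \<in> disc"
  shows "hdist a b = hdist c d \<longleftrightarrow> hcosh a b = hcosh c d"
  using hdist_le_iff_hcosh[of a b c d] hdist_le_iff_hcosh[of c d a b] assms by auto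

lemma hcosh_commute: "hcosh y z = hcosh z y"
  by (simp add: hcosh_def norm_minus_commute mult.commute)

lemma hdist_commute: "hdist y z = hdist z y"
  by (simp add: hdist_eq_arcosh_hcosh hcosh_commute)

lemma hdist_self: "hdist y y = 0"
  by (simp add: hdist_eq_arcosh_hcosh hcosh_def)

lemma hdist_eq_0_iff: "y \<in> disc \<Longrightarrow> z \<in> disc \<Longrightarrow> hdist y z = 0 \<longleftrightarrow> y = z"
proof
  assume "y \<in> disc" "z \<in> disc" "hdist y z = 0"
  then have "hcosh y z = 1" using hcosh_ge_1 by (simp add: hdist_eq_arcosh_hcosh)
  moreover have "(1 - (cmod y)^2) * (1 - (cmod z)^2) > 0"
    using \<open>y\<in>disc\<close> \<open>z\<in>disc\<close> disc_norm_sq_less_1 by simp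
  ultimately have "(cmod (y - z))^2 = 0" unfolding hcosh_def by (auto simp add: divide_eq_0_iff)
  then show "y = z" by simp
qed (simp add: hdist_self)

section \<open>Moebius maps\<close>

definition su11 :: "complex \<Rightarrow> complex \<Rightarrow> bool" where
  "su11 a b \<longleftrightarrow> (cmod a)^2 - (cmod b)^2 = 1"

lemma su11_cnj: "su11 a b \<Longrightarrow> a * cnj a - b * cnj b = 1"
proof -
  assume "su11 a b"
  then have "complex_of_real ((cmod a)^2 - (cmod b)^2) = 1" by (simp add: su11_def)
  then show ?thesis by (simp only: of_real_diff complex_norm_square)
qed

lemma su11_norm_less: "su11 a b \<Longrightarrow> cmod b < cmod a"
  unfolding su11_def by (smt (verit, best) norm_ge_zero power_mono)

lemma moeb_denom_nonzero:
  assumes "su11 a b" "z \<in> disc"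
  shows "cnj b * z + cnj a \<noteq> 0"
proof
  assume "cnj b * z + cnj a = 0"
  then have "cmod (cnj a) = cmod (cnj b * z)" by (metis add_eq_0_iff norm_minus_cancel)
  also have "\<dots> \<le> cmod b" using assms(2) by (simp add: norm_mult disc_iff mult_left_le)
  finally show False using su11_norm_less[OF assms(1)] by simp
qed

lemma moeb_diff:
  assumes "su11 a b" "y \<in> disc" "z \<in> disc"
  shows "moeb a b y - moeb a b z = (y - z) / ((cnj b * y + cnj a) * (cnj b * z + cnj a))"
proof -
  have d: "a * cnj a - b * cnj b = 1" using su11_cnj[OF assms(1)] .
  have ny: "cnj b * y + cnj a \<noteq> 0" and nz: "cnj b * z + cnj a \<noteq> 0"
    using moeb_denom_nonzero assms by auto
  have "(a * y + b) * (cnj b * z + cnj a) - (a * z + b) * (cnj b * y + cnj a) = (y - z) * (a * cnj a - b * cnj b)"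
    by (simp add: algebra_simps)
  then show ?thesis using ny nz d unfolding moeb_def by (simp add: field_simps)
qed

lemma norm_moeb_denom_sq_diff:
  assumes "su11 a b"
  shows "(cmod (cnj b * z + cnj a))^2 - (cmod (a * z + b))^2 = 1 - (cmod z)^2"
proof -
  have d: "a * cnj a - b * cnj b = 1" using su11_cnj[OF assms(1)] .
  have "complex_of_real ((cmod (cnj b * z + cnj a))^2 - (cmod (a * z + b))^2)
      = (cnj b * z + cnj a) * cnj (cnj b * z + cnj a) - (a * z + b) * cnj (a * z + b)"
    by (simp only: of_real_diff complex_norm_square)
  also have "\<dots> = (a * cnj a - b * cnj b) * (1 - z * cnj z)" by (simp add: algebra_simps)
  also have "\<dots> = 1 - z * cnj z" using d by simp
  also have "\<dots> = complex_of_real (1 - (cmod z)^2)" by (simp only: of_real_diff of_real_1 complex_norm_square)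
  finally show ?thesis using of_real_eq_iff by blast
qed

lemma one_minus_norm_moeb_sq:
  assumes "su11 a b" "z \<in> disc"
  shows "1 - (cmod (moeb a b z))^2 = (1 - (cmod z)^2) / (cmod (cnj b * z + cnj a))^2"
proof -
  have nz: "cnj b * z + cnj a \<noteq> 0" using moeb_denom_nonzero assms by auto
  have "cmod (moeb a b z) = cmod (a * z + b) / cmod (cnj b * z + cnj a)"
    by (simp add: moeb_def norm_divide)
  then have "(cmod (moeb a b z))^2 = (cmod (a * z + b))^2 / (cmod (cnj b * z + cnj a))^2"
    by (simp add: power_divide)
  moreover have "(cmod (cnj b * z + cnj a))^2 > 0" using nz by simp
  ultimately show ?thesis using norm_moeb_denom_sq_diff[OF assms(1), of z]
    by (simp add: field_simps)
qed

lemma moeb_in_disc: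
  assumes "su11 a b" "z \<in> disc"
  shows "moeb a b z \<in> disc"
proof -
  have nz: "cnj b * z + cnj a \<noteq> 0" using moeb_denom_nonzero assms by auto
  have "1 - (cmod (moeb a b z))^2 > 0"
    using one_minus_norm_moeb_sq[OF assms] disc_norm_sq_less_1[OF assms(2)] nz by simp
  then show ?thesis unfolding disc_iff by (smt (verit) norm_ge_zero one_le_power)
qed

lemma hcosh_moeb:
  assumes "su11 a b" "y \<in> disc" "z \<in> disc"
  shows "hcosh (moeb a b y) (moeb a b z) = hcosh y z"
proof -
  let ?dy = "cnj b * y + cnj a" and ?dz = "cnj b * z + cnj a"
  have ny: "?dy \<noteq> 0" and nz: "?dz \<noteq> 0" using moeb_denom_nonzero assms by auto
  have 1: "cmod (moeb a b y - moeb a b z) = cmod (y - z) / (cmod ?dy * cmod ?dz)"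
    using moeb_diff[OF assms] by (simp add: norm_divide norm_mult)
  have y1: "1 - (cmod y)^2 > 0" and z1: "1 - (cmod z)^2 > 0" using disc_norm_sq_less_1 assms by auto
  show ?thesis unfolding hcosh_def 1 one_minus_norm_moeb_sq[OF assms(1,2)] one_minus_norm_moeb_sq[OF assms(1,3)]
    using ny nz y1 z1 by (simp add: field_simps power_divide power_mult_distrib)
qed

lemma hdist_moeb:
  assumes "su11 a b" "y \<in> disc" "z \<in> disc"
  shows "hdist (moeb a b y) (moeb a b z) = hdist y z"
  using hcosh_moeb[OF assms] by (simp add: hdist_eq_arcosh_hcosh)

lemma su11_inverse: "su11 a b \<Longrightarrow> su11 (cnj a) (- b)"
  by (simp add: su11_def)

text \<open>\<open>moeb a b\<close> acts by the matrix \<open>((a, b), (cnj b, cnj a))\<close>; composition multiplies matrices.\<close>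
lemma moeb_moeb:
  assumes "su11 c d" "z \<in> disc"
  shows "moeb a b (moeb c d z) = moeb (a * c + b * cnj d) (a * d + b * cnj c) z"
proof -
  let ?N = "c * z + d" and ?D = "cnj d * z + cnj c"
  have nz: "?D \<noteq> 0" using moeb_denom_nonzero assms by auto
  have 1: "a * (?N / ?D) + b = (a * ?N + b * ?D) / ?D" using nz by (simp add: field_simps)
  have 2: "cnj b * (?N / ?D) + cnj a = (cnj b * ?N + cnj a * ?D) / ?D" using nz by (simp add: field_simps)
  have "moeb a b (moeb c d z) = (a * ?N + b * ?D) / (cnj b * ?N + cnj a * ?D)"
    unfolding moeb_def 1 2 using nz by (simp add: divide_divide_times_eq)
  also have "\<dots> = moeb (a * c + b * cnj d) (a * d + b * cnj c) z"
    unfolding moeb_def by (simp add: algebra_simps)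
  finally show ?thesis .
qed

lemma su11_compose: "su11 a b \<Longrightarrow> su11 c d \<Longrightarrow> su11 (a * c + b * cnj d) (a * d + b * cnj c)"
proof -
  assume "su11 a b" "su11 c d"
  then have d1: "a * cnj a - b * cnj b = 1" and d2: "c * cnj c - d * cnj d = 1" using su11_cnj by auto
  have "complex_of_real ((cmod (a * c + b * cnj d))^2 - (cmod (a * d + b * cnj c))^2)
     = (a * cnj a - b * cnj b) * (c * cnj c - d * cnj d)"
    by (simp only: of_real_diff complex_norm_square) (simp add: algebra_simps)
  then have "complex_of_real ((cmod (a * c + b * cnj d))^2 - (cmod (a * d + b * cnj c))^2) = 1"
    using d1 d2 by simp
  then show ?thesis unfolding su11_def using of_real_eq_1_iff by blast
qed

lemma moeb_comp_closed:
  assumes "su11 a b" "su11 c d"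
  shows "\<exists>\<alpha> \<beta>. su11 \<alpha> \<beta> \<and> (\<forall>z\<in>disc. moeb \<alpha> \<beta> z = moeb a b (moeb c d z))"
  using su11_compose[OF assms] moeb_moeb[OF assms(2)] by (intro exI conjI) auto

lemma moeb_inverse_left:
  assumes "su11 a b" "z \<in> disc"
  shows "moeb (cnj a) (- b) (moeb a b z) = z"
proof -
  have d: "a * cnj a - b * cnj b = 1" using su11_cnj[OF assms(1)] .
  have "moeb (cnj a) (- b) (moeb a b z) = moeb (cnj a * a + (-b) * cnj b) (cnj a * b + (- b) * cnj a) z"
    using moeb_moeb[OF assms] by simp
  also have "\<dots> = z" using d by (simp add: moeb_def algebra_simps)
  finally show ?thesis .
qed

lemma moeb_inverse_right:
  assumes "su11 a b" "z \<in> disc"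
  shows "moeb a b (moeb (cnj a) (- b) z) = z"
  using moeb_inverse_left[OF su11_inverse[OF assms(1)] assms(2)] by simp

lemma disc_aut_su11: "disc_aut g \<Longrightarrow> \<exists>a b. su11 a b \<and> g = moeb a b"
  by (auto simp: disc_aut_def su11_def)

lemma rotation_moeb:
  assumes "cmod e = 1"
  shows "su11 (csqrt e) 0" and "moeb (csqrt e) 0 z = e * z"
proof -
  have c: "cmod (csqrt e) = 1" using assms by (simp add: norm_csqrt)
  then show "su11 (csqrt e) 0" by (simp add: su11_def)
  have cc: "csqrt e * cnj (csqrt e) = 1" using c complex_norm_square[of "csqrt e"] by simp
  have nz: "csqrt e \<noteq> 0" using c by auto
  then have "cnj (csqrt e) = 1 / csqrt e" using cc by (simp add: field_simps mult.commute)
  then have "csqrt e / cnj (csqrt e) = (csqrt e)^2" by (simp add: power2_eq_square)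
  then have "csqrt e / cnj (csqrt e) = e" by simp
  moreover have "moeb (csqrt e) 0 z = (csqrt e / cnj (csqrt e)) * z" by (simp add: moeb_def)
  ultimately show "moeb (csqrt e) 0 z = e * z" by simp
qed

lemma hcosh_0_left: "hcosh 0 u = 1 + 2 * (cmod u)^2 / (1 - (cmod u)^2)"
  by (simp add: hcosh_def)

lemma cosh_hdist_0: "u \<in> disc \<Longrightarrow> cosh (hdist u 0) = (1 + (cmod u)^2) / (1 - (cmod u)^2)"
proof -
  assume u: "u \<in> disc"
  have z: "0 \<in> disc" by (simp add: disc_iff)
  have m: "1 - (cmod u)^2 \<noteq> 0" using disc_norm_sq_less_1[OF u] by simp
  have "cosh (hdist u 0) = 1 + 2 * (cmod u)^2 / (1 - (cmod u)^2)"
    using cosh_hdist[OF u z] hcosh_0_left hcosh_commute by metis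
  also have "\<dots> = (1 + (cmod u)^2) / (1 - (cmod u)^2)"
    using m by (simp add: divide_simps)
  finally show ?thesis .
qed

lemma sinh_hdist_0:
  assumes u: "u \<in> disc"
  shows "sinh (hdist u 0) = 2 * cmod u / (1 - (cmod u)^2)"
proof -
  have z: "0 \<in> disc" by (simp add: disc_iff)
  have m: "1 - (cmod u)^2 > 0" using disc_norm_sq_less_1[OF u] by simp
  have "sinh (hdist u 0) = sqrt ((hcosh u 0)^2 - 1)"
    using hcosh_ge_1[OF u z] by (simp add: hdist_eq_arcosh_hcosh sinh_arcosh_real)
  also have "hcosh u 0 = (1 + (cmod u)^2) / (1 - (cmod u)^2)"
    using cosh_hdist[OF u z] cosh_hdist_0[OF u] by simp
  also have "((1 + (cmod u)^2) / (1 - (cmod u)^2))^2 - 1 = (2 * cmod u / (1 - (cmod u)^2))^2"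
    using m by (simp add: divide_simps) (simp add: power2_eq_square algebra_simps)
  also have "sqrt \<dots> = 2 * cmod u / (1 - (cmod u)^2)" using m by simp
  finally show ?thesis .
qed

lemma hdist_triangle_0:
  assumes u: "u \<in> disc" and v: "v \<in> disc"
  shows "hdist u v \<le> hdist u 0 + hdist 0 v"
proof -
  have z: "0 \<in> disc" by (simp add: disc_iff)
  let ?a = "cmod u" and ?b = "cmod v"
  have ma: "1 - ?a^2 > 0" and mb: "1 - ?b^2 > 0" using disc_norm_sq_less_1 u v by auto
  have "cosh (hdist u 0 + hdist 0 v) = cosh (hdist u 0) * cosh (hdist v 0) + sinh (hdist u 0) * sinh (hdist v 0)"
    by (simp add: cosh_add hdist_commute)
  also have "\<dots> = (1 + ?a^2) / (1 - ?a^2) * ((1 + ?b^2) / (1 - ?b^2)) + 2 * ?a / (1 - ?a^2) * (2 * ?b / (1 - ?b^2))"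
    by (simp add: cosh_hdist_0 sinh_hdist_0 u v)
  also have "\<dots> = 1 + 2 * (?a + ?b)^2 / ((1 - ?a^2) * (1 - ?b^2))"
    using ma mb by (simp add: divide_simps) (simp add: power2_eq_square algebra_simps)
  finally have e: "cosh (hdist u 0 + hdist 0 v) = 1 + 2 * (?a + ?b)^2 / ((1 - ?a^2) * (1 - ?b^2))" .
  have "cmod (u - v) \<le> ?a + ?b" by (rule norm_triangle_ineq4)
  then have "(cmod (u - v))^2 \<le> (?a + ?b)^2" by (simp add: power_mono)
  then have "hcosh u v \<le> 1 + 2 * (?a + ?b)^2 / ((1 - ?a^2) * (1 - ?b^2))"
    unfolding hcosh_def using ma mb by (simp add: divide_right_mono)
  then have "cosh (hdist u v) \<le> cosh (hdist u 0 + hdist 0 v)" using e cosh_hdist[OF u v] by simp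
  then show ?thesis
    using cosh_real_nonneg_le_iff hdist_nonneg u v z by (smt (verit))
qed

lemma exists_moeb_to_0:
  assumes "c \<in> disc"
  shows "\<exists>a b. su11 a b \<and> moeb a b c = 0"
proof -
  have m: "1 - (cmod c)^2 > 0" using disc_norm_sq_less_1[OF assms] by simp
  define r where "r = 1 / sqrt (1 - (cmod c)^2)"
  have r2: "r^2 * (1 - (cmod c)^2) = 1" using m by (simp add: r_def power_divide)
  have "su11 (complex_of_real r) (- c * complex_of_real r)"
    unfolding su11_def using r2 by (simp add: norm_mult power_mult_distrib algebra_simps)
  moreover have "moeb (complex_of_real r) (- c * complex_of_real r) c = 0"
    by (simp add: moeb_def)
  ultimately show ?thesis by blast
qed

lemma hdist_triangle:
  assumes y: "y \<in> disc" and z: "z \<in> disc" and c: "c \<in> disc"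
  shows "hdist y z \<le> hdist y c + hdist c z"
proof -
  obtain a b where n: "su11 a b" and m: "moeb a b c = 0" using exists_moeb_to_0[OF c] by blast
  have "hdist (moeb a b y) (moeb a b z) \<le> hdist (moeb a b y) 0 + hdist 0 (moeb a b z)"
    by (rule hdist_triangle_0) (use moeb_in_disc n y z in auto)
  then show ?thesis using hdist_moeb n y z c m by metis
qed

section \<open>The model geodesic and the projection onto it\<close>

lemma tanh_artanh_real:
  assumes "\<bar>x::real\<bar> < 1"
  shows "tanh (artanh x) = x"
proof -
  have q: "(1 + x) / (1 - x) > 0" using assms by (simp add: abs_less_iff)
  have "exp (- 2 * artanh x) = 1 / ((1 + x) / (1 - x))"
    unfolding artanh_def using q by (simp add: exp_minus exp_ln)
  also have "\<dots> = (1 - x) / (1 + x)" by simp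
  finally have e: "exp (- 2 * artanh x) = (1 - x) / (1 + x)" .
  have "1 + x > 0" "1 - x > 0" using assms by (auto simp: abs_less_iff)
  then show ?thesis unfolding tanh_real_altdef e by (simp add: field_simps)
qed

definition diam_geo :: "real \<Rightarrow> complex" where
  "diam_geo s = complex_of_real (tanh (s / 2))"

lemma diam_geo_in_disc: "diam_geo s \<in> disc"
  using tanh_real_bounds[of "s/2"] by (simp add: diam_geo_def disc_iff abs_less_iff)

lemma of_real_in_disc: "\<bar>p\<bar> < 1 \<Longrightarrow> complex_of_real p \<in> disc"
  by (simp add: disc_iff)

lemma hcosh_of_real: "hcosh (complex_of_real p) (complex_of_real q) = 1 + 2 * (p - q)^2 / ((1 - p^2) * (1 - q^2))"
  by (simp add: hcosh_def flip: of_real_diff)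

lemma hcosh_diam_geo: "hcosh (diam_geo s) (diam_geo t) = cosh (s - t)"
proof -
  let ?a = "s/2" and ?b = "t/2"
  have ca: "cosh ?a > 0" and cb: "cosh ?b > 0" by auto
  have 1: "1 - tanh x ^ 2 = 1 / cosh x ^ 2" for x :: real
  proof -
    have c: "cosh x ^ 2 > 0" by simp
    have "1 - tanh x ^ 2 = (cosh x ^ 2 - sinh x ^ 2) / cosh x ^ 2"
      unfolding tanh_def using c by (simp add: power_divide diff_divide_distrib)
    also have "cosh x ^ 2 - sinh x ^ 2 = 1" using cosh_square_eq[of x] by simp
    finally show ?thesis .
  qed
  have 2: "tanh ?a - tanh ?b = sinh (?a - ?b) / (cosh ?a * cosh ?b)"
    unfolding tanh_def sinh_diff using ca cb by (simp add: field_simps)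
  have "hcosh (diam_geo s) (diam_geo t) = 1 + 2 * (sinh (?a - ?b))^2"
    unfolding diam_geo_def hcosh_of_real 1 2 using ca cb by (simp add: field_simps power2_eq_square)
  also have "\<dots> = cosh (2 * (?a - ?b))" using cosh_double[of "?a - ?b"] cosh_square_eq[of "?a - ?b"] by simp
  also have "2 * (?a - ?b) = s - t" by simp
  finally show ?thesis .
qed

lemma hdist_diam_geo: "hdist (diam_geo s) (diam_geo t) = \<bar>s - t\<bar>"
proof -
  have e: "cosh (s - t) = cosh \<bar>s - t\<bar>" by (simp add: abs_real_def)
  show ?thesis unfolding hdist_eq_arcosh_hcosh hcosh_diam_geo e by (rule arcosh_cosh_real) simp
qed

lemma hdist_circle:
  assumes r: "r \<ge> 0" and q: "cmod q = tanh (r / 2)"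
  shows "hdist q 0 = r" and "hdist q (- q) = 2 * r"
proof -
  define a where "a = tanh (r / 2)"
  have a0: "a \<ge> 0" using r by (simp add: a_def)
  have ra: "diam_geo r = complex_of_real a" "diam_geo (- r) = - complex_of_real a"
    by (simp_all add: diam_geo_def a_def)
  have "hcosh q 0 = hcosh (diam_geo r) (diam_geo 0)"
    unfolding ra hcosh_commute[of q] hcosh_commute[of "complex_of_real a"]
    using q a0 by (simp add: hcosh_0_left diam_geo_def a_def)
  then show "hdist q 0 = r" using hdist_diam_geo[of r 0] r by (simp add: hdist_eq_arcosh_hcosh)
  have "cmod (q - - q) = 2 * a" "cmod (complex_of_real a - - complex_of_real a) = 2 * a"
    using q a0 by (simp_all add: norm_mult a_def)
  then have "hcosh q (- q) = hcosh (diam_geo r) (diam_geo (- r))"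
    unfolding ra hcosh_def using q a0 by (simp add: a_def)
  then show "hdist q (- q) = 2 * r" using hdist_diam_geo[of r "- r"] r by (simp add: hdist_eq_arcosh_hcosh)
qed

text \<open>The foot of the perpendicular from \<open>u\<close> to the real diameter is the real \<open>p\<close> minimising
  \<open>hcosh u p\<close>; stationarity is \<open>Re u * p^2 - (1 + |u|^2) * p + Re u = 0\<close>, and \<open>diam_proj u\<close> is its
  root of modulus less than 1.\<close>
definition diam_proj :: "complex \<Rightarrow> real" where
  "diam_proj u = 2 * Re u / ((1 + (cmod u)^2) + sqrt ((1 + (cmod u)^2)^2 - 4 * (Re u)^2))"

lemma four_Re_sq_le: "4 * (Re u)^2 \<le> (1 + (cmod u)^2)^2"
proof -
  have "(1 - cmod u)^2 \<ge> 0" by simp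
  then have "2 * cmod u \<le> 1 + (cmod u)^2" by (simp add: power2_eq_square algebra_simps)
  moreover have "\<bar>Re u\<bar> \<le> cmod u" by (rule abs_Re_le_cmod)
  ultimately have "(2 * \<bar>Re u\<bar>)^2 \<le> (1 + (cmod u)^2)^2" by (intro power_mono) auto
  then show ?thesis by (simp add: power_mult_distrib)
qed

lemma diam_proj_denom_pos: "1 + (cmod u)^2 + sqrt ((1 + (cmod u)^2)^2 - 4 * (Re u)^2) > 0"
  using four_Re_sq_le[of u] by (simp add: add_pos_nonneg)

lemma diam_proj_abs_less_1:
  assumes u: "u \<in> disc"
  shows "\<bar>diam_proj u\<bar> < 1"
proof -
  let ?c = "1 + (cmod u)^2" and ?S = "sqrt ((1 + (cmod u)^2)^2 - 4 * (Re u)^2)"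
  have S: "?S \<ge> 0" using four_Re_sq_le[of u] by simp
  have "(1 - cmod u)^2 > 0" using u by (simp add: disc_iff)
  then have cu: "2 * cmod u < ?c" by (simp add: power2_eq_square algebra_simps)
  have "\<bar>diam_proj u\<bar> = 2 * \<bar>Re u\<bar> / (?c + ?S)"
    using diam_proj_denom_pos[of u] by (simp add: diam_proj_def abs_div)
  also have "\<dots> \<le> 2 * \<bar>Re u\<bar> / ?c"
    using S by (intro divide_left_mono) (auto intro!: mult_pos_pos simp: add_pos_nonneg)
  also have "\<dots> < 1" using abs_Re_le_cmod[of u] cu by (simp add: field_simps)
  finally show ?thesis .
qed

lemma diam_proj_quadratic: "Re u * (diam_proj u)^2 - (1 + (cmod u)^2) * diam_proj u + Re u = 0"
proof -
  let ?r = "Re u" and ?c = "1 + (cmod u)^2"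
  define S where "S = sqrt (?c^2 - 4 * ?r^2)"
  define D where "D = ?c + S"
  have S2: "S^2 = ?c^2 - 4 * ?r^2" using four_Re_sq_le[of u] by (simp add: S_def)
  have pos: "D > 0" using diam_proj_denom_pos[of u] by (simp add: S_def D_def)
  have P: "diam_proj u = 2 * ?r / D" by (simp add: diam_proj_def S_def D_def)
  have "(?r * (diam_proj u)^2 - ?c * diam_proj u + ?r) * D^2 = ?r * (4 * ?r^2 - 2 * ?c * D + D^2)"
    unfolding P using pos by (simp add: field_simps power2_eq_square)
  also have "\<dots> = ?r * (4 * ?r^2 - ?c^2 + S^2)" by (simp add: D_def power2_eq_square algebra_simps)
  also have "\<dots> = 0" using S2 by simp
  finally show ?thesis using pos by simp
qed

lemma diam_proj_pos_le:
  assumes "Re u > 0"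
  shows "0 < diam_proj u" and "diam_proj u \<le> 2 * Re u"
proof -
  define S where "S = sqrt ((1 + (cmod u)^2)^2 - 4 * (Re u)^2)"
  have "S \<ge> 0" using four_Re_sq_le[of u] by (simp add: S_def)
  then have den: "1 + (cmod u)^2 + S \<ge> 1" by simp
  have P: "diam_proj u = 2 * Re u / (1 + (cmod u)^2 + S)" by (simp add: diam_proj_def S_def)
  show "0 < diam_proj u" unfolding P using assms den by simp
  show "diam_proj u \<le> 2 * Re u" unfolding P using assms den by (simp add: divide_le_eq mult_le_cancel_left1)
qed

lemma norm_diff_of_real_sq: "(cmod (u - complex_of_real p))^2 = (cmod u)^2 - 2 * p * Re u + p^2"
  by (simp only: cmod_power2) (simp add: power2_eq_square algebra_simps)

lemma hcosh_diam_proj_less: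
  assumes u: "u \<in> disc" and p: "\<bar>p\<bar> < 1" and ne: "p \<noteq> diam_proj u"
  shows "hcosh u (complex_of_real (diam_proj u)) < hcosh u (complex_of_real p)"
proof -
  let ?r = "Re u" and ?m = "(cmod u)^2" and ?p0 = "diam_proj u"
  have p0: "\<bar>?p0\<bar> < 1" and E: "?r * ?p0^2 - (1 + ?m) * ?p0 + ?r = 0"
    using diam_proj_abs_less_1[OF u] diam_proj_quadratic[of u] by auto
  have mu: "1 - ?m > 0" using disc_norm_sq_less_1[OF u] by simp
  have a1: "cmod u < 1" using u by (simp add: disc_iff)
  have ar: "\<bar>?r\<bar> \<le> cmod u" by (rule abs_Re_le_cmod)
  have "\<bar>?r\<bar> * \<bar>?p0\<bar> \<le> cmod u * 1" using ar p0 by (intro mult_mono) auto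
  then have "\<bar>?r * ?p0\<bar> \<le> cmod u" by (simp add: abs_mult)
  moreover have "(1 - cmod u)^2 > 0" using a1 by simp
  then have "2 * cmod u < 1 + ?m" by (simp add: power2_eq_square algebra_simps)
  ultimately have K: "1 + ?m - 2 * ?r * ?p0 > 0" by linarith
  have pp: "1 - p^2 > 0" and pp0: "1 - ?p0^2 > 0" using p p0 by (simp_all add: abs_square_less_1)
  have id: "(?m - 2 * p * ?r + p^2) * (1 - ?p0^2) - (?m - 2 * ?p0 * ?r + ?p0^2) * (1 - p^2)
     = (p - ?p0)^2 * (1 + ?m - 2 * ?r * ?p0) - 2 * (p - ?p0) * (?r * ?p0^2 - (1 + ?m) * ?p0 + ?r)"
    by (simp add: algebra_simps power2_eq_square)
  have "(p - ?p0)^2 > 0" using ne by simp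
  then have pos: "(?m - 2 * p * ?r + p^2) * (1 - ?p0^2) - (?m - 2 * ?p0 * ?r + ?p0^2) * (1 - p^2) > 0"
    unfolding id E using K by simp
  have "(?m - 2 * ?p0 * ?r + ?p0^2) / (1 - ?p0^2) < (?m - 2 * p * ?r + p^2) / (1 - p^2)"
    using pos pp pp0 by (simp add: divide_simps)
  then have "(2 / (1 - ?m)) * ((?m - 2 * ?p0 * ?r + ?p0^2) / (1 - ?p0^2)) < (2 / (1 - ?m)) * ((?m - 2 * p * ?r + p^2) / (1 - p^2))"
    using mu by (intro mult_strict_left_mono) auto
  moreover have "2 * X / ((1 - ?m) * (1 - q^2)) = (2 / (1 - ?m)) * (X / (1 - q^2))" for X q :: real
    by simp
  ultimately show ?thesis unfolding hcosh_def norm_diff_of_real_sq by simp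
qed

definition diam_dist :: "complex \<Rightarrow> real" where
  "diam_dist u = hdist u (complex_of_real (diam_proj u))"

definition diam_par :: "complex \<Rightarrow> real" where
  "diam_par u = 2 * artanh (diam_proj u)"

lemma diam_geo_diam_par: "u \<in> disc \<Longrightarrow> diam_geo (diam_par u) = complex_of_real (diam_proj u)"
  using tanh_artanh_real[OF diam_proj_abs_less_1] by (simp add: diam_geo_def diam_par_def)

lemma diam_dist_less_hdist_diam_geo:
  assumes u: "u \<in> disc" and s: "s \<noteq> diam_par u"
  shows "diam_dist u < hdist u (diam_geo s)"
proof -
  have pu: "\<bar>diam_proj u\<bar> < 1" using diam_proj_abs_less_1[OF u] .
  have "tanh (s / 2) \<noteq> diam_proj u"
  proof
    assume "tanh (s / 2) = diam_proj u"
    then have "artanh (tanh (s / 2)) = artanh (diam_proj u)" by simp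
    then show False using s by (simp add: artanh_tanh_real diam_par_def)
  qed
  then have "hcosh u (complex_of_real (diam_proj u)) < hcosh u (diam_geo s)"
    using hcosh_diam_proj_less[OF u] tanh_real_bounds[of "s/2"] by (simp add: diam_geo_def abs_less_iff)
  then show ?thesis
    unfolding diam_dist_def using hdist_less_iff_hcosh u diam_geo_in_disc of_real_in_disc[OF pu] by blast
qed

section \<open>Unit speed geodesics\<close>

lemma norm_diff_sq_if_hcosh_eq:
  assumes u: "u \<in> disc" and v: "v \<in> disc" and p: "\<bar>p\<bar> < 1" and q: "\<bar>q\<bar> < 1"
    and up: "cmod u = \<bar>p\<bar>" and vq: "cmod v = \<bar>q\<bar>"
    and h: "hcosh u v = hcosh (complex_of_real p) (complex_of_real q)"
  shows "(cmod (u - v))^2 = (p - q)^2"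
proof -
  have d1: "1 - p^2 > 0" "1 - q^2 > 0" using p q by (auto simp: abs_square_less_1)
  have "(cmod u)^2 = p^2" "(cmod v)^2 = q^2" using up vq by simp_all
  then have "2 * (cmod (u - v))^2 / ((1 - p^2) * (1 - q^2)) = 2 * (p - q)^2 / ((1 - p^2) * (1 - q^2))"
    using h unfolding hcosh_def by (simp flip: of_real_diff)
  then show ?thesis using d1 by (simp add: divide_simps)
qed

lemma eq_of_real_mult_unit:
  assumes up: "cmod u = \<bar>p\<bar>" and e: "cmod e = 1" and q: "q \<noteq> 0"
    and h: "(cmod (u - complex_of_real q * e))^2 = (p - q)^2"
  shows "u = complex_of_real p * e"
proof -
  define w where "w = u * cnj e"
  have ee: "e * cnj e = 1" using e complex_norm_square[of e] by simp
  have uw: "u = w * e" unfolding w_def using ee by (simp add: mult.assoc mult.commute)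
  have cw: "cmod w = \<bar>p\<bar>" using up e by (simp add: w_def norm_mult)
  have "u - complex_of_real q * e = (w - complex_of_real q) * e" unfolding uw by (simp add: algebra_simps)
  then have "cmod (u - complex_of_real q * e) = cmod (w - complex_of_real q)" using e by (simp add: norm_mult)
  then have 1: "(Re w - q)^2 + (Im w)^2 = (p - q)^2" using h by (simp add: cmod_power2)
  have 2: "(Re w)^2 + (Im w)^2 = p^2" using cw by (metis cmod_power2 power2_abs)
  have "q * (Re w - p) = (((Re w)^2 + (Im w)^2 - p^2) - ((Re w - q)^2 + (Im w)^2 - (p - q)^2)) / 2"
    by (simp add: power2_eq_square algebra_simps)
  also have "\<dots> = 0" using 1 2 by simp
  finally have "q * (Re w - p) = 0" .
  then have rw: "Re w = p" using q by simp
  then have "Im w = 0" using 2 by simp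
  then have "w = complex_of_real p" using rw by (simp add: complex_eq_iff)
  then show ?thesis using uw by simp
qed

lemma unit_geodesic_in_disc: "unit_geodesic \<kappa> \<Longrightarrow> \<kappa> s \<in> disc"
  by (auto simp: unit_geodesic_def)

lemma hcosh_unit_geodesic:
  assumes "unit_geodesic \<kappa>"
  shows "hcosh (\<kappa> s) (\<kappa> t) = hcosh (diam_geo s) (diam_geo t)"
proof -
  have "hdist (\<kappa> s) (\<kappa> t) = hdist (diam_geo s) (diam_geo t)"
    using assms hdist_diam_geo by (simp add: unit_geodesic_def)
  then show ?thesis using hdist_eq_iff_hcosh unit_geodesic_in_disc[OF assms] diam_geo_in_disc by blast
qed

lemma norm_eq_if_hdist_0_eq:
  assumes u: "u \<in> disc" and v: "v \<in> disc" and h: "hdist 0 u = hdist 0 v"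
  shows "cmod u = cmod v"
proof -
  have z: "0 \<in> disc" by (simp add: disc_iff)
  have "hcosh 0 u = hcosh 0 v" using h hdist_eq_iff_hcosh[OF z u z v] by simp
  then have h2: "2 * (cmod u)^2 / (1 - (cmod u)^2) = 2 * (cmod v)^2 / (1 - (cmod v)^2)"
    unfolding hcosh_0_left by simp
  have a: "1 - (cmod u)^2 > 0" "1 - (cmod v)^2 > 0" using disc_norm_sq_less_1 u v by auto
  from h2 a have "(cmod u)^2 * (1 - (cmod v)^2) = (cmod v)^2 * (1 - (cmod u)^2)"
    by (simp add: divide_simps)
  then have "(cmod u)^2 = (cmod v)^2" by (simp add: algebra_simps)
  then show ?thesis by (simp add: power2_eq_iff_nonneg)
qed

text \<open>Distance to \<open>\<gamma> 0 = 0\<close> fixes \<open>|\<gamma> s|\<close>, and distance to \<open>\<gamma> 1\<close> then fixes its direction.\<close>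
lemma unit_geodesic_through_0:
  assumes g: "unit_geodesic \<gamma>" and l0: "\<gamma> 0 = 0"
  shows "\<exists>e. cmod e = 1 \<and> (\<forall>s. \<gamma> s = e * diam_geo s)"
proof -
  have mag: "cmod (\<gamma> s) = \<bar>tanh (s/2)\<bar>" for s
  proof -
    have "hdist 0 (\<gamma> s) = \<bar>0 - s\<bar>" using g l0 unfolding unit_geodesic_def by metis
    also have "\<dots> = hdist 0 (diam_geo s)" using hdist_diam_geo[of 0 s] by (simp add: diam_geo_def)
    finally have "hdist 0 (\<gamma> s) = hdist 0 (diam_geo s)" .
    then show ?thesis
      using norm_eq_if_hdist_0_eq[OF unit_geodesic_in_disc[OF g] diam_geo_in_disc] by (simp add: diam_geo_def)
  qed
  define q where "q = tanh (1/2::real)"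
  have q0: "q > 0" by (simp add: q_def)
  define e where "e = \<gamma> 1 / complex_of_real q"
  have l1: "\<gamma> 1 = complex_of_real q * e" using q0 by (simp add: e_def)
  have e1: "cmod e = 1" using mag[of 1] q0 by (simp add: e_def norm_divide q_def)
  have "\<gamma> s = e * diam_geo s" for s
  proof -
    have h: "hcosh (\<gamma> s) (\<gamma> 1) = hcosh (diam_geo s) (diam_geo 1)" by (rule hcosh_unit_geodesic[OF g])
    have "(cmod (\<gamma> s - \<gamma> 1))^2 = (tanh (s/2) - q)^2"
      using norm_diff_sq_if_hcosh_eq[OF unit_geodesic_in_disc[OF g] unit_geodesic_in_disc[OF g], of "tanh (s/2)" q] h mag[of s] mag[of 1]
        tanh_real_bounds[of "s/2"] tanh_real_bounds[of "1/2"]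
      by (simp add: diam_geo_def q_def abs_less_iff)
    then have "\<gamma> s = complex_of_real (tanh (s/2)) * e"
      using eq_of_real_mult_unit[of "\<gamma> s" "tanh (s/2)" e q] mag[of s] e1 q0 l1 by simp
    then show ?thesis by (simp add: diam_geo_def mult.commute)
  qed
  then show ?thesis using e1 by blast
qed

lemma unit_geodesic_moeb:
  assumes n: "su11 a b" and g: "unit_geodesic \<kappa>"
  shows "unit_geodesic (\<lambda>s. moeb a b (\<kappa> (s + t)))"
proof -
  have k: "\<kappa> s \<in> disc" for s using unit_geodesic_in_disc[OF g] .
  show ?thesis
    unfolding unit_geodesic_def using moeb_in_disc[OF n k] hdist_moeb[OF n k k] g
    by (auto simp: unit_geodesic_def)
qed

lemma unit_geodesic_eq_moeb_diam_geo:
  assumes g: "unit_geodesic \<kappa>"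
  shows "\<exists>a b. su11 a b \<and> (\<forall>s. \<kappa> s = moeb a b (diam_geo (s - t)))"
proof -
  obtain a0 b0 where n0: "su11 a0 b0" and m0: "moeb a0 b0 (\<kappa> t) = 0"
    using exists_moeb_to_0[OF unit_geodesic_in_disc[OF g]] by blast
  obtain e where e1: "cmod e = 1" and le: "\<forall>s. moeb a0 b0 (\<kappa> (s + t)) = e * diam_geo s"
    using unit_geodesic_through_0[OF unit_geodesic_moeb[OF n0 g]] m0 by auto
  obtain a b where n: "su11 a b"
    and ab: "\<forall>z\<in>disc. moeb a b z = moeb (cnj a0) (- b0) (moeb (csqrt e) 0 z)"
    using moeb_comp_closed[OF su11_inverse[OF n0] rotation_moeb(1)[OF e1]] by blast
  have "\<kappa> s = moeb a b (diam_geo (s - t))" for s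
  proof -
    have "\<kappa> s = moeb (cnj a0) (- b0) (moeb a0 b0 (\<kappa> s))"
      using moeb_inverse_left[OF n0 unit_geodesic_in_disc[OF g]] by simp
    also have "moeb a0 b0 (\<kappa> s) = e * diam_geo (s - t)" using le[rule_format, of "s - t"] by simp
    also have "moeb (cnj a0) (- b0) (e * diam_geo (s - t)) = moeb a b (diam_geo (s - t))"
      using ab rotation_moeb(2)[OF e1] diam_geo_in_disc by simp
    finally show ?thesis .
  qed
  then show ?thesis using n by blast
qed

lemma proj_par_dist_geo_via_model:
  assumes u: "u \<in> disc"
    and h: "\<And>s. hdist y (\<kappa> s) = hdist u (diam_geo (s - t))"
  shows "proj_par \<kappa> y = t + diam_par u"
    and "dist_geo \<kappa> y = diam_dist u"
proof -
  define s0 where "s0 = t + diam_par u"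
  have at_s0: "hdist y (\<kappa> s0) = diam_dist u"
    using h diam_geo_diam_par[OF u] by (simp add: s0_def diam_dist_def)
  have less: "hdist y (\<kappa> s0) < hdist y (\<kappa> s)" if "s \<noteq> s0" for s
    using h diam_dist_less_hdist_diam_geo[OF u, of "s - t"] that at_s0 by (simp add: s0_def)
  have le: "hdist y (\<kappa> s0) \<le> hdist y (\<kappa> s)" for s
    using less[of s] by (cases "s = s0") auto
  show "proj_par \<kappa> y = t + diam_par u"
    unfolding proj_par_def s0_def[symmetric]
  proof (rule the_equality)
    show "\<forall>s. hdist y (\<kappa> s0) \<le> hdist y (\<kappa> s)" using le by blast
    fix s1 assume "\<forall>s. hdist y (\<kappa> s1) \<le> hdist y (\<kappa> s)"
    then have "hdist y (\<kappa> s1) \<le> hdist y (\<kappa> s0)" by blast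
    then show "s1 = s0" using less[of s1] by (cases "s1 = s0") auto
  qed
  have "dist_geo \<kappa> y = hdist y (\<kappa> s0)"
    unfolding dist_geo_def
  proof (rule antisym)
    show "(INF s. hdist y (\<kappa> s)) \<le> hdist y (\<kappa> s0)"
      by (rule cINF_lower) (use le in \<open>auto intro!: bdd_belowI2[where m="hdist y (\<kappa> s0)"]\<close>)
    show "hdist y (\<kappa> s0) \<le> (INF s. hdist y (\<kappa> s))"
      by (rule cINF_greatest) (use le in auto)
  qed
  then show "dist_geo \<kappa> y = diam_dist u" using at_s0 by simp
qed

lemma hdist_geodesic_via_moeb:
  assumes n: "su11 a b" and k: "\<And>s. \<kappa> s = moeb a b (diam_geo (s - t))" and y: "y \<in> disc"
  shows "hdist y (\<kappa> s) = hdist (moeb (cnj a) (- b) y) (diam_geo (s - t))"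
proof -
  have kd: "\<kappa> s \<in> disc" using k moeb_in_disc[OF n diam_geo_in_disc] by simp
  have "hdist y (\<kappa> s) = hdist (moeb (cnj a) (- b) y) (moeb (cnj a) (- b) (\<kappa> s))"
    using hdist_moeb[OF su11_inverse[OF n] y kd] by simp
  also have "moeb (cnj a) (- b) (\<kappa> s) = diam_geo (s - t)"
    using k moeb_inverse_left[OF n diam_geo_in_disc] by simp
  finally show ?thesis .
qed

lemma hdist_proj_par:
  assumes g: "unit_geodesic \<kappa>" and y: "y \<in> disc"
  shows "hdist y (\<kappa> (proj_par \<kappa> y)) = dist_geo \<kappa> y"
proof -
  obtain a b where n: "su11 a b" and k: "\<And>s. \<kappa> s = moeb a b (diam_geo (s - 0))"
    using unit_geodesic_eq_moeb_diam_geo[OF g, of 0] by blast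
  let ?u = "moeb (cnj a) (- b) y"
  have u: "?u \<in> disc" using moeb_in_disc[OF su11_inverse[OF n] y] .
  have h: "\<And>s. hdist y (\<kappa> s) = hdist ?u (diam_geo (s - 0))" using hdist_geodesic_via_moeb[OF n k y] .
  show ?thesis
    using h proj_par_dist_geo_via_model[OF u h] diam_geo_diam_par[OF u] by (simp add: diam_dist_def)
qed

section \<open>The Fuchsian group and part (1)\<close>

lemma fuchsian_moeb: "fuchsian G \<Longrightarrow> g \<in> G \<Longrightarrow> \<exists>a b. su11 a b \<and> g = moeb a b"
  unfolding fuchsian_def using disc_aut_su11 by blast

lemma fuchsian_in_disc: "fuchsian G \<Longrightarrow> g \<in> G \<Longrightarrow> z \<in> disc \<Longrightarrow> g z \<in> disc"
  using fuchsian_moeb moeb_in_disc by blast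

lemma fuchsian_hdist:
  "fuchsian G \<Longrightarrow> g \<in> G \<Longrightarrow> y \<in> disc \<Longrightarrow> z \<in> disc \<Longrightarrow> hdist (g y) (g z) = hdist y z"
  using fuchsian_moeb hdist_moeb by blast

lemma fuchsian_id: "fuchsian G \<Longrightarrow> (\<lambda>z. z) \<in> G"
  unfolding fuchsian_def by blast

lemma fuchsian_comp: "fuchsian G \<Longrightarrow> g \<in> G \<Longrightarrow> h \<in> G \<Longrightarrow> \<exists>k\<in>G. \<forall>z\<in>disc. k z = g (h z)"
  unfolding fuchsian_def by blast

lemma fuchsian_inverse:
  assumes fu: "fuchsian G" and g: "g \<in> G"
  shows "\<exists>h\<in>G. \<forall>z\<in>disc. h (g z) = z \<and> g (h z) = z"
proof -
  obtain h where h: "h \<in> G" and hg: "\<forall>z\<in>disc. h (g z) = z"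
    using fu g unfolding fuchsian_def by blast
  obtain a b where n: "su11 a b" and ga: "g = moeb a b" using fuchsian_moeb[OF fu g] by blast
  have "g (h z) = z" if z: "z \<in> disc" for z
  proof -
    let ?z' = "moeb (cnj a) (- b) z"
    have "g ?z' = z" using moeb_inverse_right[OF n z] ga by simp
    moreover have "h (g ?z') = ?z'" using hg moeb_in_disc[OF su11_inverse[OF n] z] by blast
    ultimately show ?thesis by simp
  qed
  then show ?thesis using h hg by blast
qed

lemma fuchsian_continuous_on: "fuchsian G \<Longrightarrow> g \<in> G \<Longrightarrow> continuous_on disc g"
  using fuchsian_moeb moeb_denom_nonzero
  by (fastforce simp: moeb_def intro!: continuous_intros)

lemma orbit_in_disc: "fuchsian G \<Longrightarrow> x \<in> disc \<Longrightarrow> y \<in> orbit G x \<Longrightarrow> y \<in> disc"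
  unfolding orbit_def using fuchsian_in_disc by blast

lemma orbit_closed:
  assumes fu: "fuchsian G" and x: "x \<in> disc" and g: "g \<in> G" and y: "y \<in> orbit G x"
  shows "g y \<in> orbit G x"
proof -
  obtain c where c: "c \<in> G" and yc: "y = c x" using y unfolding orbit_def by blast
  obtain k where k: "k \<in> G" and "\<forall>z\<in>disc. k z = g (c z)" using fuchsian_comp[OF fu g c] by blast
  then have "g y = k x" using x yc by simp
  then show ?thesis using k unfolding orbit_def by blast
qed

lemma two_inj_rad_le_hdist:
  assumes fu: "fuchsian G" and x: "x \<in> disc"
    and y: "y \<in> orbit G x" and z: "z \<in> orbit G x" and ne: "y \<noteq> z"
  shows "2 * inj_rad G x \<le> hdist y z"
proof -
  let ?S = "{hdist y z | y z. y \<in> orbit G x \<and> z \<in> orbit G x \<and> y \<noteq> z}"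
  have "bdd_below ?S"
    by (rule bdd_belowI[where m=0]) (use orbit_in_disc[OF fu x] hdist_nonneg in auto)
  moreover have "hdist y z \<in> ?S" using y z ne by blast
  ultimately have "Inf ?S \<le> hdist y z" by (intro cInf_lower)
  then show ?thesis by (simp add: inj_rad_def)
qed

lemma Splus_separated:
  assumes fu: "fuchsian G" and x: "x \<in> disc" and g: "unit_geodesic \<kappa>"
  shows "separated (2 * (inj_rad G x - \<rho>)) (Splus G \<kappa> \<rho> x)"
  unfolding separated_def
proof (intro ballI impI)
  fix s s' assume s: "s \<in> Splus G \<kappa> \<rho> x" and s': "s' \<in> Splus G \<kappa> \<rho> x" and ne: "s \<noteq> s'"
  obtain y where y: "y \<in> orbit G x" "y \<in> nbhd_plus \<kappa> \<rho>" and sy: "s = proj_par \<kappa> y"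
    using s unfolding Splus_def by blast
  obtain z where z: "z \<in> orbit G x" "z \<in> nbhd_plus \<kappa> \<rho>" and sz: "s' = proj_par \<kappa> z"
    using s' unfolding Splus_def by blast
  have yz: "y \<noteq> z" using ne sy sz by auto
  have yd: "y \<in> disc" and zd: "z \<in> disc" using orbit_in_disc[OF fu x] y z by auto
  have dy: "dist_geo \<kappa> y \<le> \<rho>" and dz: "dist_geo \<kappa> z \<le> \<rho>"
    using y(2) z(2) by (auto simp: nbhd_plus_def)
  have ks: "\<kappa> s \<in> disc" and ks': "\<kappa> s' \<in> disc" using unit_geodesic_in_disc[OF g] by auto
  have "hdist y z \<le> hdist y (\<kappa> s) + hdist (\<kappa> s) z" by (rule hdist_triangle[OF yd zd ks])
  also have "hdist (\<kappa> s) z \<le> hdist (\<kappa> s) (\<kappa> s') + hdist (\<kappa> s') z"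
    by (rule hdist_triangle[OF ks zd ks'])
  also have "hdist (\<kappa> s) (\<kappa> s') = \<bar>s - s'\<bar>" using g by (simp add: unit_geodesic_def)
  also have "hdist y (\<kappa> s) = dist_geo \<kappa> y" using hdist_proj_par[OF g yd] sy by simp
  also have "hdist (\<kappa> s') z = dist_geo \<kappa> z" using hdist_proj_par[OF g zd] sz by (simp add: hdist_commute)
  finally have "hdist y z \<le> dist_geo \<kappa> y + (\<bar>s - s'\<bar> + dist_geo \<kappa> z)" by simp
  moreover have "2 * inj_rad G x \<le> hdist y z" by (rule two_inj_rad_le_hdist[OF fu x y(1) z(1) yz])
  ultimately show "2 * (inj_rad G x - \<rho>) \<le> \<bar>s - s'\<bar>" using dy dz by simp
qed

section \<open>The injectivity radius is attained\<close>

lemma disc_not_compact: "\<not> compact disc"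
proof
  assume "compact disc"
  then have "closed disc" by (rule compact_imp_closed)
  moreover have "open disc" by (simp add: disc_def)
  ultimately have "disc = {} \<or> disc = UNIV" using clopen by blast
  moreover have "0 \<in> disc" "1 \<notin> disc" by (auto simp: disc_iff)
  ultimately show False by auto
qed

text \<open>A group fixing \<open>x\<close> would be finite by discreteness, and finitely many images of a compact
  set cannot cover the non-compact disc.\<close>
lemma fuchsian_cocompact_moves_point:
  assumes fu: "fuchsian G" and cc: "cocompact G" and x: "x \<in> disc"
  shows "\<exists>c\<in>G. c x \<noteq> x"
proof (rule ccontr)
  assume "\<not> ?thesis"
  then have "G = {g\<in>G. hdist (g x) x \<le> 0}" by (auto simp: hdist_self)
  moreover have "finite {g\<in>G. hdist (g x) x \<le> 0}" using fu x unfolding fuchsian_def by blast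
  ultimately have fin: "finite G" by simp
  obtain K where K: "compact K" "K \<subseteq> disc" "disc \<subseteq> (\<Union>g\<in>G. g ` K)"
    using cc unfolding cocompact_def by blast
  have "compact (\<Union>g\<in>G. g ` K)"
    using fin K(1,2) fuchsian_continuous_on[OF fu]
    by (intro compact_UN compact_continuous_image) (auto intro: continuous_on_subset)
  moreover have "(\<Union>g\<in>G. g ` K) = disc" using K fuchsian_in_disc[OF fu] by blast
  ultimately show False using disc_not_compact by simp
qed

lemma orbit_distances_eq:
  assumes fu: "fuchsian G" and x: "x \<in> disc"
  shows "{hdist y z | y z. y \<in> orbit G x \<and> z \<in> orbit G x \<and> y \<noteq> z}
       = {hdist (c x) x | c. c \<in> G \<and> c x \<noteq> x}"
proof (intro equalityI subsetI)
  fix d assume "d \<in> {hdist y z | y z. y \<in> orbit G x \<and> z \<in> orbit G x \<and> y \<noteq> z}"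
  then obtain h1 h2 where h: "h1 \<in> G" "h2 \<in> G" "h1 x \<noteq> h2 x" and d: "d = hdist (h1 x) (h2 x)"
    unfolding orbit_def by blast
  obtain k where k: "k \<in> G" "\<forall>z\<in>disc. k (h2 z) = z \<and> h2 (k z) = z"
    using fuchsian_inverse[OF fu h(2)] by blast
  obtain c where c: "c \<in> G" "\<forall>z\<in>disc. c z = k (h1 z)" using fuchsian_comp[OF fu k(1) h(1)] by blast
  have h1x: "h1 x \<in> disc" and h2x: "h2 x \<in> disc" using fuchsian_in_disc[OF fu] h x by auto
  have cx: "c x = k (h1 x)" using c x by simp
  have "d = hdist (k (h1 x)) (k (h2 x))" using d fuchsian_hdist[OF fu k(1) h1x h2x] by simp
  then have d': "d = hdist (c x) x" using cx k x by simp
  have "c x \<noteq> x"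
  proof
    assume "c x = x"
    then have "h2 (k (h1 x)) = h2 x" using cx by simp
    then show False using k h1x h(3) by simp
  qed
  then show "d \<in> {hdist (c x) x | c. c \<in> G \<and> c x \<noteq> x}" using c(1) d' by blast
next
  fix d assume "d \<in> {hdist (c x) x | c. c \<in> G \<and> c x \<noteq> x}"
  then obtain c where c: "c \<in> G" "c x \<noteq> x" and d: "d = hdist (c x) x" by blast
  have "c x \<in> orbit G x" "x \<in> orbit G x" using c fuchsian_id[OF fu] unfolding orbit_def by force+
  then show "d \<in> {hdist y z | y z. y \<in> orbit G x \<and> z \<in> orbit G x \<and> y \<noteq> z}" using c d by blast
qed

lemma inj_rad_attained:
  assumes fu: "fuchsian G" and cc: "cocompact G" and x: "x \<in> disc"
  shows "\<exists>c\<in>G. c x \<noteq> x \<and> hdist (c x) x = 2 * inj_rad G x"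
proof -
  let ?S = "{hdist (c x) x | c. c \<in> G \<and> c x \<noteq> x}"
  obtain c0 where c0: "c0 \<in> G" "c0 x \<noteq> x" using fuchsian_cocompact_moves_point[OF fu cc x] by blast
  define R where "R = hdist (c0 x) x"
  define S' where "S' = (\<lambda>c. hdist (c x) x) ` {c\<in>G. hdist (c x) x \<le> R \<and> c x \<noteq> x}"
  have "finite {g\<in>G. hdist (g x) x \<le> R}" using fu x unfolding fuchsian_def by blast
  then have finS: "finite S'" unfolding S'_def by (rule finite_imageI[OF finite_subset, rotated]) blast
  have neS: "S' \<noteq> {}" unfolding S'_def using c0 R_def by blast
  define m where "m = Min S'"
  have "m \<in> S'" unfolding m_def using Min_in[OF finS neS] .
  then obtain c where c: "c \<in> G" "c x \<noteq> x" "hdist (c x) x = m" unfolding S'_def by blast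
  have mR: "m \<le> R" using Min_le[OF finS] c0 unfolding m_def S'_def R_def by blast
  have "Inf ?S = m"
  proof (rule cInf_eq_minimum)
    show "m \<in> ?S" using c by blast
    fix s assume "s \<in> ?S"
    then obtain c' where c': "c' \<in> G" "c' x \<noteq> x" "s = hdist (c' x) x" by blast
    show "m \<le> s"
    proof (cases "s \<le> R")
      case True
      then have "s \<in> S'" unfolding S'_def using c' by blast
      then show ?thesis unfolding m_def using Min_le[OF finS] by blast
    next
      case False
      then show ?thesis using mR by simp
    qed
  qed
  then have "2 * inj_rad G x = m" unfolding inj_rad_def orbit_distances_eq[OF fu x] by simp
  then show ?thesis using c by auto
qed

section \<open>Unit tangent vectors and isometries\<close>

lemma moeb_has_field_derivative:
  assumes n: "su11 a b" and z: "z \<in> disc"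
  shows "(moeb a b has_field_derivative 1 / (cnj b * z + cnj a)^2) (at z)"
proof -
  have d: "a * cnj a - b * cnj b = 1" using su11_cnj[OF n] .
  have nz: "cnj b * z + cnj a \<noteq> 0" using moeb_denom_nonzero[OF n z] .
  have "((\<lambda>z. (a * z + b) / (cnj b * z + cnj a)) has_field_derivative
        (a * (cnj b * z + cnj a) - (a * z + b) * cnj b) / (cnj b * z + cnj a)^2) (at z)"
    using nz by (auto intro!: derivative_eq_intros simp: power2_eq_square)
  moreover have "a * (cnj b * z + cnj a) - (a * z + b) * cnj b = 1"
    using d by (simp add: algebra_simps)
  ultimately show ?thesis unfolding moeb_def[abs_def] by simp
qed

lemma diam_geo_shift_vector_derivative: "((\<lambda>x. diam_geo (x - t)) has_vector_derivative complex_of_real (1/2)) (at t)"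
proof -
  have "((\<lambda>x. tanh ((x - t) / 2)) has_field_derivative (1 - tanh ((t - t)/2) ^ 2) * (1/2)) (at t)"
    by (auto intro!: derivative_eq_intros)
  then have "((\<lambda>x. tanh ((x - t) / 2)) has_field_derivative 1/2) (at t)" by simp
  then show ?thesis unfolding diam_geo_def by (rule has_vector_derivative_of_real)
qed

lemma moeb_diam_geo_vector_derivative:
  assumes n: "su11 a b"
  shows "((\<lambda>x. moeb a b (diam_geo (x - t))) has_vector_derivative 1 / (2 * (cnj a)^2)) (at t)"
proof -
  have "(moeb a b has_field_derivative 1 / (cnj b * 0 + cnj a)^2) (at (diam_geo (t - t)))"
    using moeb_has_field_derivative[OF n, of 0] by (simp add: diam_geo_def disc_iff)
  from field_vector_diff_chain_at[OF diam_geo_shift_vector_derivative this]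
  show ?thesis by (simp add: o_def)
qed

text \<open>The isometry moving \<open>w\<close> to 0 and turning the direction \<open>v\<close> to the positive real axis:
  it carries a unit speed geodesic with tangent vector \<open>(w, v)\<close> at time \<open>t\<close> onto the model geodesic
  \<open>diam_geo\<close> shifted by \<open>t\<close>.  Unit tangent vectors thus parametrise isometries.\<close>
definition tangent_chart :: "complex \<Rightarrow> complex \<Rightarrow> complex \<Rightarrow> complex" where
  "tangent_chart w v y = (complex_of_real (cmod v) / v) * ((y - w) / (1 - cnj w * y))"

text \<open>\<open>(b / cnj a, 1 / (2 * (cnj a)^2))\<close> is the tangent vector of \<open>\<lambda>s. moeb a b (diam_geo s)\<close> at 0.\<close>
lemma tangent_chart_eq_moeb:
  assumes n: "su11 a b" and y: "y \<in> disc"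
  shows "tangent_chart (b / cnj a) (1 / (2 * (cnj a)^2)) y = moeb (cnj a) (- b) y"
proof -
  have a0: "a \<noteq> 0" using su11_norm_less[OF n] by auto
  have ca: "complex_of_real ((cmod a)^2) = a * cnj a" by (rule complex_norm_square)
  have "complex_of_real (cmod (1 / (2 * (cnj a)^2))) = 1 / (2 * (a * cnj a))"
    using ca by (simp add: norm_divide norm_mult norm_power)
  then have 1: "complex_of_real (cmod (1 / (2 * (cnj a)^2))) / (1 / (2 * (cnj a)^2)) = cnj a / a"
    using a0 by (simp add: field_simps power2_eq_square)
  have den: "cnj (- b) * y + cnj (cnj a) \<noteq> 0" using moeb_denom_nonzero[OF su11_inverse[OF n] y] .
  then have den': "a - cnj b * y \<noteq> 0" by (simp add: algebra_simps)
  have 2: "(y - b / cnj a) / (1 - cnj (b / cnj a) * y) = (a / cnj a) * ((cnj a * y - b) / (a - cnj b * y))"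
    using a0 den' by (simp add: field_simps)
  show ?thesis unfolding tangent_chart_def 1 2 moeb_def using a0 den' by (simp add: field_simps)
qed

lemma unit_geodesic_fuchsian_image:
  assumes fu: "fuchsian G" and g: "g \<in> G" and k: "unit_geodesic \<kappa>"
  shows "unit_geodesic (\<lambda>s. g (\<kappa> s))"
  using fuchsian_moeb[OF fu g] unit_geodesic_moeb[OF _ k, of _ _ 0] by auto

lemma chart_denom_nonzero: "w \<in> disc \<Longrightarrow> y \<in> disc \<Longrightarrow> 1 - cnj w * y \<noteq> 0"
proof
  assume w: "w \<in> disc" and y: "y \<in> disc" and e: "1 - cnj w * y = 0"
  then have "cmod (cnj w * y) = 1" by (metis eq_iff_diff_eq_0 norm_one)
  moreover have "cmod (cnj w * y) < 1"
    using w y by (simp add: norm_mult disc_iff) (metis mult_strict_mono' norm_ge_zero mult_1_right)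
  ultimately show False by simp
qed

lemma tangent_chart_in_disc:
  assumes w: "w \<in> disc" and y: "y \<in> disc"
  shows "tangent_chart w v y \<in> disc"
proof -
  have "complex_of_real ((cmod (1 - cnj w * y))^2 - (cmod (y - w))^2)
      = (1 - cnj w * y) * cnj (1 - cnj w * y) - (y - w) * cnj (y - w)"
    by (simp only: of_real_diff complex_norm_square)
  also have "\<dots> = (1 - w * cnj w) * (1 - y * cnj y)" by (simp add: algebra_simps)
  also have "\<dots> = complex_of_real ((1 - (cmod w)^2) * (1 - (cmod y)^2))"
    by (simp only: of_real_mult of_real_diff of_real_1 complex_norm_square)
  finally have "(cmod (1 - cnj w * y))^2 - (cmod (y - w))^2 = (1 - (cmod w)^2) * (1 - (cmod y)^2)"
    using of_real_eq_iff by blast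
  moreover have "(1 - (cmod w)^2) * (1 - (cmod y)^2) > 0" using disc_norm_sq_less_1 w y by simp
  ultimately have "(cmod (y - w))^2 < (cmod (1 - cnj w * y))^2" by linarith
  then have "cmod (y - w) < cmod (1 - cnj w * y)" by (rule power_less_imp_less_base) simp
  then have "cmod ((y - w) / (1 - cnj w * y)) < 1"
    using chart_denom_nonzero[OF w y] by (simp add: norm_divide)
  moreover have "cmod (complex_of_real (cmod v) / v) \<le> 1"
    by (cases "v = 0") (simp_all add: norm_divide)
  ultimately have "cmod (complex_of_real (cmod v) / v) * cmod ((y - w) / (1 - cnj w * y)) < 1"
    by (meson le_less_trans mult_left_le_one_le norm_ge_zero)
  then show ?thesis by (simp only: tangent_chart_def disc_iff norm_mult)
qed

lemma hdist_geodesic_via_tangent_chart: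
  assumes fu: "fuchsian G" and g: "g \<in> G" and k: "unit_geodesic \<kappa>" and y: "y \<in> disc"
  shows "hdist y (g (\<kappa> s))
    = hdist (tangent_chart (g (\<kappa> t)) (deriv g (\<kappa> t) * vector_derivative \<kappa> (at t)) y) (diam_geo (s - t))"
proof -
  obtain a b where n: "su11 a b" and kk: "\<And>s. \<kappa> s = moeb a b (diam_geo (s - t))"
    using unit_geodesic_eq_moeb_diam_geo[OF k, of t] by blast
  have kd: "(\<kappa> has_vector_derivative 1 / (2 * (cnj a)^2)) (at t)"
    using moeb_diam_geo_vector_derivative[OF n, of t] kk by (metis (no_types, lifting) ext)
  obtain a1 b1 where n1: "su11 a1 b1" and g1: "g = moeb a1 b1" using fuchsian_moeb[OF fu g] by blast
  have gd: "(g has_field_derivative deriv g (\<kappa> t)) (at (\<kappa> t))"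
    using moeb_has_field_derivative[OF n1 unit_geodesic_in_disc[OF k]] g1 DERIV_imp_deriv by metis
  have c1: "((g \<circ> \<kappa>) has_vector_derivative vector_derivative \<kappa> (at t) * deriv g (\<kappa> t)) (at t)"
    using field_vector_diff_chain_at[OF kd gd] vector_derivative_at[OF kd] by simp
  obtain a2 b2 where n2: "su11 a2 b2" and kk2: "\<And>s. g (\<kappa> s) = moeb a2 b2 (diam_geo (s - t))"
    using unit_geodesic_eq_moeb_diam_geo[OF unit_geodesic_fuchsian_image[OF fu g k], of t] by blast
  have c2: "((g \<circ> \<kappa>) has_vector_derivative 1 / (2 * (cnj a2)^2)) (at t)"
    using moeb_diam_geo_vector_derivative[OF n2, of t] kk2 by (simp add: o_def)
  have v: "deriv g (\<kappa> t) * vector_derivative \<kappa> (at t) = 1 / (2 * (cnj a2)^2)"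
    using vector_derivative_unique_at[OF c1 c2] by (simp add: mult.commute)
  have w: "g (\<kappa> t) = b2 / cnj a2" unfolding kk2 by (simp add: diam_geo_def moeb_def)
  show ?thesis
    using hdist_geodesic_via_moeb[OF n2 kk2 y] tangent_chart_eq_moeb[OF n2 y] v w by simp
qed

lemma moeb_two_point_transitive:
  assumes y1: "y1 \<in> disc" and y2: "y2 \<in> disc" and q1: "q1 \<in> disc" and q2: "q2 \<in> disc"
    and ne: "y1 \<noteq> y2" and h: "hdist y1 y2 = hdist q1 q2"
  shows "\<exists>\<alpha> \<beta>. su11 \<alpha> \<beta> \<and> moeb \<alpha> \<beta> y1 = q1 \<and> moeb \<alpha> \<beta> y2 = q2"
proof -
  obtain a1 b1 where n1: "su11 a1 b1" and A1: "moeb a1 b1 y1 = 0" using exists_moeb_to_0[OF y1] by blast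
  obtain a2 b2 where n2: "su11 a2 b2" and A2: "moeb a2 b2 q1 = 0" using exists_moeb_to_0[OF q1] by blast
  define \<zeta> where "\<zeta> = moeb a1 b1 y2"
  define \<xi> where "\<xi> = moeb a2 b2 q2"
  have zd: "\<zeta> \<in> disc" and xd: "\<xi> \<in> disc" using moeb_in_disc n1 n2 y2 q2 by (auto simp: \<zeta>_def \<xi>_def)
  have "hdist 0 \<zeta> = hdist 0 \<xi>"
    using hdist_moeb[OF n1 y1 y2] hdist_moeb[OF n2 q1 q2] h A1 A2 by (simp add: \<zeta>_def \<xi>_def)
  then have mz: "cmod \<zeta> = cmod \<xi>" by (rule norm_eq_if_hdist_0_eq[OF zd xd])
  have z0: "\<zeta> \<noteq> 0"
  proof
    assume "\<zeta> = 0"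
    then have "moeb (cnj a1) (- b1) (moeb a1 b1 y2) = moeb (cnj a1) (- b1) (moeb a1 b1 y1)"
      using A1 by (simp add: \<zeta>_def)
    then show False using moeb_inverse_left[OF n1 y1] moeb_inverse_left[OF n1 y2] ne by simp
  qed
  define e where "e = \<xi> / \<zeta>"
  have x0: "\<xi> \<noteq> 0" using mz z0 by (metis norm_eq_zero)
  have e1: "cmod e = 1" using mz z0 x0 by (simp add: e_def norm_divide)
  obtain c1 d1 where nc: "su11 c1 d1" and C1: "\<forall>z\<in>disc. moeb c1 d1 z = moeb (csqrt e) 0 (moeb a1 b1 z)"
    using moeb_comp_closed[OF rotation_moeb(1)[OF e1] n1] by blast
  obtain \<alpha> \<beta> where na: "su11 \<alpha> \<beta>"
    and C2: "\<forall>z\<in>disc. moeb \<alpha> \<beta> z = moeb (cnj a2) (- b2) (moeb c1 d1 z)"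
    using moeb_comp_closed[OF su11_inverse[OF n2] nc] by blast
  have T: "moeb \<alpha> \<beta> z = moeb (cnj a2) (- b2) (e * moeb a1 b1 z)" if "z \<in> disc" for z
    using C1 C2 rotation_moeb(2)[OF e1] that by simp
  have "moeb \<alpha> \<beta> y1 = q1" using T[OF y1] A1 moeb_inverse_left[OF n2 q1] A2 by simp
  moreover have "moeb \<alpha> \<beta> y2 = q2"
    using T[OF y2] moeb_inverse_left[OF n2 q2] z0 by (simp add: \<zeta>_def[symmetric] \<xi>_def[symmetric] e_def)
  ultimately show ?thesis using na by blast
qed

lemma unit_tangent_D: "(w, v) \<in> unit_tangent \<Longrightarrow> w \<in> disc \<and> v \<noteq> 0"
  unfolding unit_tangent_def by (cases "v = 0") simp_all

lemma exists_unit_tangent_chart: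
  assumes y1: "y1 \<in> disc" and y2: "y2 \<in> disc" and q1: "q1 \<in> disc" and q2: "q2 \<in> disc"
    and ne: "y1 \<noteq> y2" and h: "hdist y1 y2 = hdist q1 q2"
  shows "\<exists>w v. (w, v) \<in> unit_tangent \<and> tangent_chart w v y1 = q1 \<and> tangent_chart w v y2 = q2"
proof -
  obtain \<alpha> \<beta> where n: "su11 \<alpha> \<beta>" and m1: "moeb \<alpha> \<beta> y1 = q1" and m2: "moeb \<alpha> \<beta> y2 = q2"
    using moeb_two_point_transitive[OF assms] by blast
  define w where "w = - \<beta> / \<alpha>"
  define v where "v = 1 / (2 * \<alpha>^2)"
  have chart: "tangent_chart w v y = moeb \<alpha> \<beta> y" if "y \<in> disc" for y
    using tangent_chart_eq_moeb[OF su11_inverse[OF n] that] by (simp add: w_def v_def)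
  have A: "(cmod \<alpha>)^2 - (cmod \<beta>)^2 = 1" using n by (simp add: su11_def)
  have A0: "cmod \<alpha> > 0" using su11_norm_less[OF n] norm_ge_zero[of \<beta>] by linarith
  have "1 - (cmod w)^2 = ((cmod \<alpha>)^2 - (cmod \<beta>)^2) / (cmod \<alpha>)^2"
    using A0 by (simp add: w_def norm_divide power_divide diff_divide_distrib)
  then have "1 - (cmod w)^2 = 1 / (cmod \<alpha>)^2" using A by simp
  moreover have "cmod v = 1 / (2 * (cmod \<alpha>)^2)" by (simp add: v_def norm_divide norm_mult norm_power)
  moreover have wd: "w \<in> disc"
    using su11_norm_less[OF n] A0 by (simp add: w_def disc_iff norm_divide)
  ultimately have "(w, v) \<in> unit_tangent"
    using A0 disc_norm_sq_less_1[OF wd] by (simp add: unit_tangent_def)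
  then show ?thesis using chart y1 y2 m1 m2 by blast
qed

section \<open>Openness and density\<close>

lemma tendsto_hdist:
  assumes f: "(f \<longlongrightarrow> a) F" and g: "(g \<longlongrightarrow> b) F" and a: "a \<in> disc" and b: "b \<in> disc"
  shows "((\<lambda>x. hdist (f x) (g x)) \<longlongrightarrow> hdist a b) F"
proof -
  have "\<forall>\<^sub>F x in F. f x \<in> disc" "\<forall>\<^sub>F x in F. g x \<in> disc"
    using topological_tendstoD[OF f _ a] topological_tendstoD[OF g _ b] by (auto simp: disc_def)
  then have ge1: "\<forall>\<^sub>F x in F. hcosh (f x) (g x) \<ge> 1"
    by eventually_elim (rule hcosh_ge_1)
  have "(1 - (cmod a)^2) * (1 - (cmod b)^2) \<noteq> 0"
    using disc_norm_sq_less_1[OF a] disc_norm_sq_less_1[OF b] by simp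
  then have "((\<lambda>x. hcosh (f x) (g x)) \<longlongrightarrow> hcosh a b) F"
    unfolding hcosh_def by (intro tendsto_intros f g)
  then show ?thesis
    unfolding hdist_eq_arcosh_hcosh using hcosh_ge_1[OF a b] ge1 by (rule tendsto_arcosh_strong)
qed

lemma isCont_diam_proj: "isCont diam_proj u"
  unfolding diam_proj_def[abs_def] using diam_proj_denom_pos[of u] by (intro continuous_intros) auto

lemma tendsto_diam_dist:
  assumes "(f \<longlongrightarrow> u) F" "u \<in> disc"
  shows "((\<lambda>x. diam_dist (f x)) \<longlongrightarrow> diam_dist u) F"
  unfolding diam_dist_def
  using assms of_real_in_disc[OF diam_proj_abs_less_1]
  by (intro tendsto_hdist tendsto_of_real isCont_tendsto_compose[OF isCont_diam_proj]) auto

lemma tendsto_diam_par: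
  assumes "(f \<longlongrightarrow> u) F" "u \<in> disc"
  shows "((\<lambda>x. diam_par (f x)) \<longlongrightarrow> diam_par u) F"
  unfolding diam_par_def
  using assms diam_proj_abs_less_1[OF assms(2)]
  by (intro tendsto_intros isCont_tendsto_compose[OF isCont_diam_proj]) (auto simp: abs_less_iff)

lemma isCont_tangent_chart:
  assumes "v \<noteq> 0" "1 - cnj w * y \<noteq> 0"
  shows "isCont (\<lambda>p. tangent_chart (fst p) (snd p) y) (w, v)"
  unfolding tangent_chart_def using assms by (intro continuous_intros) auto

definition diam_close_pair :: "real \<Rightarrow> real \<Rightarrow> complex \<Rightarrow> complex \<Rightarrow> bool" where
  "diam_close_pair \<rho> \<delta> u1 u2 \<longleftrightarrow> diam_dist u1 < \<rho> \<and> diam_dist u2 < \<rho>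
     \<and> 0 < \<bar>diam_par u1 - diam_par u2\<bar> \<and> \<bar>diam_par u1 - diam_par u2\<bar> < \<delta>"

lemma eventually_diam_close_pair:
  assumes w: "w \<in> disc" and v: "v \<noteq> 0" and y1: "y1 \<in> disc" and y2: "y2 \<in> disc"
    and close: "diam_close_pair \<rho> \<delta> (tangent_chart w v y1) (tangent_chart w v y2)"
  shows "\<forall>\<^sub>F p in nhds (w, v).
           diam_close_pair \<rho> \<delta> (tangent_chart (fst p) (snd p) y1) (tangent_chart (fst p) (snd p) y2)"
proof -
  have lim: "((\<lambda>p. tangent_chart (fst p) (snd p) y) \<longlongrightarrow> tangent_chart w v y) (nhds (w, v))"
    if "y \<in> disc" for y
    using isCont_tendsto_compose[OF isCont_tangent_chart[OF v chart_denom_nonzero[OF w that]] filterlim_ident]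
    by simp
  have u1: "tangent_chart w v y1 \<in> disc" and u2: "tangent_chart w v y2 \<in> disc"
    using tangent_chart_in_disc w y1 y2 by auto
  note dist1 = tendsto_diam_dist[OF lim[OF y1] u1] and dist2 = tendsto_diam_dist[OF lim[OF y2] u2]
  have par: "((\<lambda>p. \<bar>diam_par (tangent_chart (fst p) (snd p) y1) - diam_par (tangent_chart (fst p) (snd p) y2)\<bar>)
      \<longlongrightarrow> \<bar>diam_par (tangent_chart w v y1) - diam_par (tangent_chart w v y2)\<bar>) (nhds (w, v))"
    by (intro tendsto_intros tendsto_diam_par lim y1 y2 u1 u2)
  have "\<forall>\<^sub>F p in nhds (w, v). diam_dist (tangent_chart (fst p) (snd p) y1) < \<rho>"
    using order_tendstoD(2)[OF dist1] close unfolding diam_close_pair_def by blast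
  moreover have "\<forall>\<^sub>F p in nhds (w, v). diam_dist (tangent_chart (fst p) (snd p) y2) < \<rho>"
    using order_tendstoD(2)[OF dist2] close unfolding diam_close_pair_def by blast
  moreover have "\<forall>\<^sub>F p in nhds (w, v).
      0 < \<bar>diam_par (tangent_chart (fst p) (snd p) y1) - diam_par (tangent_chart (fst p) (snd p) y2)\<bar>"
    using order_tendstoD(1)[OF par] close unfolding diam_close_pair_def by blast
  moreover have "\<forall>\<^sub>F p in nhds (w, v).
      \<bar>diam_par (tangent_chart (fst p) (snd p) y1) - diam_par (tangent_chart (fst p) (snd p) y2)\<bar> < \<delta>"
    using order_tendstoD(2)[OF par] close unfolding diam_close_pair_def by blast
  ultimately show ?thesis unfolding diam_close_pair_def by eventually_elim blast
qed

lemma dense_geodesic_eventually: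
  assumes dense: "dense_geodesic G \<kappa>" and p: "p \<in> unit_tangent" and ev: "eventually P (nhds p)"
  shows "\<exists>g\<in>G. \<exists>t. P (g (\<kappa> t), deriv g (\<kappa> t) * vector_derivative \<kappa> (at t))"
proof -
  let ?D = "{(g (\<kappa> t), deriv g (\<kappa> t) * vector_derivative \<kappa> (at t)) | g t. g \<in> G}"
  obtain U where U: "open U" "p \<in> U" "\<forall>q\<in>U. P q" using ev unfolding eventually_nhds by blast
  have "p \<in> closure ?D" using dense p unfolding dense_geodesic_def by blast
  then have "U \<inter> ?D \<noteq> {}" using U(1,2) open_Int_closure_eq_empty by blast
  then show ?thesis using U(3) by blast
qed

section \<open>Part (2)\<close>

lemma hdist_uminus: "hdist (- u) (- v) = hdist u v"
proof -
  have "- u - - v = - (u - v)" by simp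
  then show ?thesis unfolding hdist_eq_arcosh_hcosh hcosh_def by (simp only: norm_minus_cancel)
qed

lemma diam_proj_uminus: "diam_proj (- u) = - diam_proj u"
  by (simp add: diam_proj_def)

text \<open>The witness \<open>q\<close> lies on the circle of hyperbolic radius \<open>D/2\<close> about 0, so \<open>q\<close> and \<open>-q\<close> are
  at distance \<open>D\<close>; a small real part puts both feet close to 0 on the diameter.\<close>
lemma model_pair_near_diameter:
  assumes D: "D > 0" and rho: "D / 2 \<le> \<rho>" and dl: "\<delta> > 0"
  shows "\<exists>q. q \<in> disc \<and> - q \<in> disc \<and> hdist q (- q) = D \<and> diam_close_pair \<rho> \<delta> q (- q)"
proof -
  define r where "r = tanh (D / 4)"
  have r0: "r > 0" and r1: "r < 1" using D tanh_real_lt_1 by (auto simp: r_def)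
  define td where "td = tanh (\<delta> / 4)"
  have td0: "td > 0" using dl by (simp add: td_def)
  define c where "c = min (r / 2) (td / 4)"
  have c0: "c > 0" and cr: "c < r" and ctd: "c \<le> td / 4" using r0 td0 by (auto simp: c_def)
  define q where "q = Complex c (sqrt (r^2 - c^2))"
  have "r^2 - c^2 \<ge> 0" using c0 cr by (simp add: power_mono)
  then have "(cmod q)^2 = r^2" unfolding q_def cmod_power2 by simp
  then have cq: "cmod q = tanh (D / 2 / 2)" using r0 by (simp add: power2_eq_iff_nonneg r_def)
  have qd: "q \<in> disc" and nqd: "- q \<in> disc" using cq r1 by (auto simp: disc_iff r_def)
  have hq0: "hdist q (diam_geo 0) = D / 2" and hq: "hdist q (- q) = D"
    using hdist_circle[OF _ cq] D by (simp_all add: diam_geo_def)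
  have Ppos: "diam_proj q > 0" and Ple: "diam_proj q \<le> 2 * c"
    using diam_proj_pos_le[of q] c0 by (simp_all add: q_def)
  have pq1: "\<bar>diam_proj q\<bar> < 1" using diam_proj_abs_less_1[OF qd] .
  have par_pos: "diam_par q > 0"
    using tanh_artanh_real[OF pq1] Ppos by (metis diam_par_def tanh_real_pos_iff zero_less_mult_iff zero_less_numeral)
  have par_small: "diam_par q < \<delta> / 2"
  proof (rule ccontr)
    assume "\<not> diam_par q < \<delta> / 2"
    then have "tanh (\<delta> / 4) \<le> tanh (artanh (diam_proj q))" by (simp add: diam_par_def)
    then have "td \<le> diam_proj q" using tanh_artanh_real[OF pq1] by (simp add: td_def)
    then show False using Ple ctd td0 by linarith
  qed
  have "diam_dist q < hdist q (diam_geo 0)"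
    using diam_dist_less_hdist_diam_geo[OF qd, of 0] par_pos by simp
  then have dist_q: "diam_dist q < \<rho>" using hq0 rho by simp
  have "diam_dist (- q) = diam_dist q"
    using hdist_uminus[of q "complex_of_real (diam_proj q)"] by (simp add: diam_dist_def diam_proj_uminus)
  moreover have "diam_par (- q) = - diam_par q"
    using pq1 by (simp add: diam_par_def diam_proj_uminus abs_less_iff)
  ultimately have "diam_close_pair \<rho> \<delta> q (- q)"
    using dist_q par_pos par_small by (simp add: diam_close_pair_def)
  then show ?thesis using qd nqd hq by blast
qed

lemma Splus_via_tangent_chart:
  assumes fu: "fuchsian G" and k: "unit_geodesic \<kappa>" and g: "g \<in> G" and x: "x \<in> disc"
    and y: "y \<in> orbit G x"
    and u: "u = tangent_chart (g (\<kappa> t)) (deriv g (\<kappa> t) * vector_derivative \<kappa> (at t)) y"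
    and near: "diam_dist u < \<rho>"
  shows "t + diam_par u \<in> Splus G \<kappa> \<rho> x"
proof -
  obtain h where h: "h \<in> G" and hg: "\<forall>z\<in>disc. h (g z) = z \<and> g (h z) = z"
    using fuchsian_inverse[OF fu g] by blast
  have yd: "y \<in> disc" using orbit_in_disc[OF fu x y] .
  have z: "h y \<in> orbit G x" and zd: "h y \<in> disc"
    using orbit_closed[OF fu x h y] fuchsian_in_disc[OF fu h yd] .
  have ud: "u \<in> disc"
    using tangent_chart_in_disc fuchsian_in_disc[OF fu g unit_geodesic_in_disc[OF k]] yd u by blast
  have "hdist (h y) (\<kappa> s) = hdist u (diam_geo (s - t))" for s
    using fuchsian_hdist[OF fu g zd unit_geodesic_in_disc[OF k]] hg yd
      hdist_geodesic_via_tangent_chart[OF fu g k yd] u by simp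
  from proj_par_dist_geo_via_model[OF ud this]
  show ?thesis
    unfolding Splus_def nbhd_plus_def using z zd near by (intro image_eqI[of _ _ "h y"]) auto
qed

lemma Splus_not_separated:
  assumes fu: "fuchsian G" and cc: "cocompact G" and x: "x \<in> disc" and k: "unit_geodesic \<kappa>"
    and dense: "dense_geodesic G \<kappa>" and ir: "inj_rad G x \<le> \<rho>" and dl: "\<delta> > 0"
  shows "\<not> separated \<delta> (Splus G \<kappa> \<rho> x)"
proof -
  obtain c where c: "c \<in> G" "c x \<noteq> x" and hc: "hdist (c x) x = 2 * inj_rad G x"
    using inj_rad_attained[OF fu cc x] by blast
  have cxd: "c x \<in> disc" using fuchsian_in_disc[OF fu c(1) x] .
  have cxo: "c x \<in> orbit G x" and xo: "x \<in> orbit G x"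
    using c(1) fuchsian_id[OF fu] unfolding orbit_def by force+
  have D: "hdist (c x) x > 0"
    using hdist_nonneg[OF cxd x] hdist_eq_0_iff[OF cxd x] c(2) by linarith
  have "hdist (c x) x / 2 \<le> \<rho>" using hc ir by simp
  then obtain q where qd: "q \<in> disc" "- q \<in> disc" and hq: "hdist q (- q) = hdist (c x) x"
    and close: "diam_close_pair \<rho> \<delta> q (- q)"
    using model_pair_near_diameter[OF D _ dl] by blast
  obtain w v where wv: "(w, v) \<in> unit_tangent"
    and chart: "tangent_chart w v (c x) = q" "tangent_chart w v x = - q"
    using exists_unit_tangent_chart[OF cxd x qd c(2) hq[symmetric]] by blast
  have "w \<in> disc" "v \<noteq> 0" using unit_tangent_D[OF wv] by auto
  from eventually_diam_close_pair[OF this cxd x] close chart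
  have "\<forall>\<^sub>F p in nhds (w, v).
          diam_close_pair \<rho> \<delta> (tangent_chart (fst p) (snd p) (c x)) (tangent_chart (fst p) (snd p) x)"
    by simp
  from dense_geodesic_eventually[OF dense wv this]
  obtain g t where g: "g \<in> G" and close':
    "diam_close_pair \<rho> \<delta> (tangent_chart (g (\<kappa> t)) (deriv g (\<kappa> t) * vector_derivative \<kappa> (at t)) (c x))
                        (tangent_chart (g (\<kappa> t)) (deriv g (\<kappa> t) * vector_derivative \<kappa> (at t)) x)"
    by auto
  define u1 where "u1 = tangent_chart (g (\<kappa> t)) (deriv g (\<kappa> t) * vector_derivative \<kappa> (at t)) (c x)"
  define u2 where "u2 = tangent_chart (g (\<kappa> t)) (deriv g (\<kappa> t) * vector_derivative \<kappa> (at t)) x"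
  have close_u: "diam_close_pair \<rho> \<delta> u1 u2" using close' by (simp add: u1_def u2_def)
  have "t + diam_par u1 \<in> Splus G \<kappa> \<rho> x" "t + diam_par u2 \<in> Splus G \<kappa> \<rho> x"
    using Splus_via_tangent_chart[OF fu k g x cxo u1_def] Splus_via_tangent_chart[OF fu k g x xo u2_def]
      close_u by (simp_all add: diam_close_pair_def)
  moreover have "t + diam_par u1 \<noteq> t + diam_par u2" "\<bar>(t + diam_par u1) - (t + diam_par u2)\<bar> < \<delta>"
    using close_u by (auto simp: diam_close_pair_def)
  ultimately show ?thesis unfolding separated_def by (meson not_le)
qed

theorem lemma3p2:
  fixes \<Gamma> :: "(complex \<Rightarrow> complex) set" and \<tau> :: "complex set" and Sd :: "complex set set"
    and \<kappa> :: "real \<Rightarrow> complex" and x :: complex and \<rho> :: real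
  assumes "fuchsian \<Gamma>" and "cocompact \<Gamma>"
    and "fundamental_domain \<Gamma> \<tau>" and "hpolygon \<tau> Sd" and "pairing_no_involution \<Gamma> \<tau> Sd"
    and "unit_geodesic \<kappa>" and "dense_geodesic \<Gamma> \<kappa>"
    and "x \<in> interior \<tau>" and "\<rho> > 0"
  shows "(\<rho> < inj_rad \<Gamma> x \<longrightarrow> separated (2 * (inj_rad \<Gamma> x - \<rho>)) (Splus \<Gamma> \<kappa> \<rho> x))
       \<and> (inj_rad \<Gamma> x \<le> \<rho> \<longrightarrow> (\<forall>\<delta>>0. \<not> separated \<delta> (Splus \<Gamma> \<kappa> \<rho> x)))"
proof -
  have "\<tau> \<subseteq> disc" using assms(3) by (simp add: fundamental_domain_def)
  then have x: "x \<in> disc" using assms(8) interior_subset by blast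
  show ?thesis
  proof (intro conjI impI allI)
    show "separated (2 * (inj_rad \<Gamma> x - \<rho>)) (Splus \<Gamma> \<kappa> \<rho> x)"
      by (rule Splus_separated[OF assms(1) x assms(6)])
    fix \<delta> :: real
    assume "inj_rad \<Gamma> x \<le> \<rho>" and "\<delta> > 0"
    then show "\<not> separated \<delta> (Splus \<Gamma> \<kappa> \<rho> x)"
      by (rule Splus_not_separated[OF assms(1,2) x assms(6,7)])
  qed
qed

end
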